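(* Let $(M^n,g_{ij},F)$, $n\ge 3$, be a gradient shrinking or expanding Ricci soliton, i.e. $R_{ij}=\nabla_i\nabla_jF+\rho g_{ij}$ with $\rho=1/2$ (shrinking) or $\rho=-1/2$ (expanding), with vanishing Weyl tensor $W_{ijkl}=0$. Let $G_\rho=|\nabla F|^2+2\rho F$. Then the Cotton tensor satisfies $$ |C_{ijk}|^2=\frac{1}{(n-2)^2}\Big(|R_{ik} \nabla_j F - R_{ij} \nabla_k F|^2-\frac{2}{n-1} \big|R\nabla F-\tfrac{1}{2}\nabla G_{\rho}\big|^2\Big).$$
   Context: $R$ is the scalar curvature. The Cotton tensor is $C_{ijk}=\nabla_k R_{ij}-\nabla_j R_{ik}-\frac{1}{2(n-1)}(g_{ij}\nabla_k R-g_{ik}\nabla_j R)$. Norms of tensors are full contractions with the metric. *)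

theory Defs
  imports "HOL-Analysis.Analysis"
begin

(* Local coordinate description of a Riemannian manifold: an open chart
   U \<subseteq> R^n (n = CARD('n)), coordinates indexed by the finite type 'n,
   metric components g i j : U \<rightarrow> R. *)

definition pd :: "'n::finite \<Rightarrow> (real^'n \<Rightarrow> real) \<Rightarrow> real^'n \<Rightarrow> real" where
  "pd i f x = frechet_derivative f (at x) (axis i 1)"

fun pds :: "'n::finite list \<Rightarrow> (real^'n \<Rightarrow> real) \<Rightarrow> real^'n \<Rightarrow> real" where
  "pds [] f = f"
| "pds (k # ks) f = pd k (pds ks f)"

definition smooth_on :: "(real^'n::finite) set \<Rightarrow> (real^'n \<Rightarrow> real) \<Rightarrow> bool" where
  "smooth_on U f \<longleftrightarrow> (\<forall>ks. pds ks f differentiable_on U)"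

definition gmat :: "('n::finite \<Rightarrow> 'n \<Rightarrow> real^'n \<Rightarrow> real) \<Rightarrow> real^'n \<Rightarrow> real^'n^'n" where
  "gmat g x = (\<chi> i j. g i j x)"

definition ginv :: "('n::finite \<Rightarrow> 'n \<Rightarrow> real^'n \<Rightarrow> real) \<Rightarrow> 'n \<Rightarrow> 'n \<Rightarrow> real^'n \<Rightarrow> real" where
  "ginv g i j x = matrix_inv (gmat g x) $ i $ j"

definition is_metric :: "(real^'n::finite) set \<Rightarrow> ('n \<Rightarrow> 'n \<Rightarrow> real^'n \<Rightarrow> real) \<Rightarrow> bool" where
  "is_metric U g \<longleftrightarrow> open U \<and> (\<forall>i j. smooth_on U (g i j))
     \<and> (\<forall>x\<in>U. \<forall>i j. g i j x = g j i x)
     \<and> (\<forall>x\<in>U. \<forall>v. v \<noteq> 0 \<longrightarrow> v \<bullet> (gmat g x *v v) > 0)"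

definition chr :: "('n::finite \<Rightarrow> 'n \<Rightarrow> real^'n \<Rightarrow> real) \<Rightarrow> 'n \<Rightarrow> 'n \<Rightarrow> 'n \<Rightarrow> real^'n \<Rightarrow> real" where
  "chr g k i j x = (1/2) * (\<Sum>l\<in>UNIV. ginv g k l x *
      (pd i (g j l) x + pd j (g i l) x - pd l (g i j) x))"

(* R_{ijk}^l, with R(d_i,d_j)d_k = R_{ijk}^l d_l *)
definition riem :: "('n::finite \<Rightarrow> 'n \<Rightarrow> real^'n \<Rightarrow> real) \<Rightarrow> 'n \<Rightarrow> 'n \<Rightarrow> 'n \<Rightarrow> 'n \<Rightarrow> real^'n \<Rightarrow> real" where
  "riem g i j k l x = pd i (chr g l j k) x - pd j (chr g l i k) x
     + (\<Sum>m\<in>UNIV. chr g l i m x * chr g m j k x - chr g l j m x * chr g m i k x)"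

definition ric :: "('n::finite \<Rightarrow> 'n \<Rightarrow> real^'n \<Rightarrow> real) \<Rightarrow> 'n \<Rightarrow> 'n \<Rightarrow> real^'n \<Rightarrow> real" where
  "ric g j k x = (\<Sum>i\<in>UNIV. riem g i j k i x)"

definition scal :: "('n::finite \<Rightarrow> 'n \<Rightarrow> real^'n \<Rightarrow> real) \<Rightarrow> real^'n \<Rightarrow> real" where
  "scal g x = (\<Sum>i\<in>UNIV. \<Sum>j\<in>UNIV. ginv g i j x * ric g i j x)"

definition rm :: "('n::finite \<Rightarrow> 'n \<Rightarrow> real^'n \<Rightarrow> real) \<Rightarrow> 'n \<Rightarrow> 'n \<Rightarrow> 'n \<Rightarrow> 'n \<Rightarrow> real^'n \<Rightarrow> real" where
  "rm g i j k l x = (\<Sum>m\<in>UNIV. riem g i j k m x * g m l x)"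

(* Weyl tensor: Rm minus its Ricci part (Kulkarni-Nomizu decomposition) *)
definition weyl :: "('n::finite \<Rightarrow> 'n \<Rightarrow> real^'n \<Rightarrow> real) \<Rightarrow> 'n \<Rightarrow> 'n \<Rightarrow> 'n \<Rightarrow> 'n \<Rightarrow> real^'n \<Rightarrow> real" where
  "weyl g i j k l x = rm g i j k l x
     - (1 / (real CARD('n) - 2)) * (ric g j k x * g i l x - ric g i k x * g j l x
                                   + ric g i l x * g j k x - ric g j l x * g i k x)
     + (scal g x / ((real CARD('n) - 1) * (real CARD('n) - 2)))
         * (g j k x * g i l x - g i k x * g j l x)"

definition hess :: "('n::finite \<Rightarrow> 'n \<Rightarrow> real^'n \<Rightarrow> real) \<Rightarrow> (real^'n \<Rightarrow> real) \<Rightarrow> 'n \<Rightarrow> 'n \<Rightarrow> real^'n \<Rightarrow> real" where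
  "hess g F i j x = pd i (pd j F) x - (\<Sum>k\<in>UNIV. chr g k i j x * pd k F x)"

definition cov_ric :: "('n::finite \<Rightarrow> 'n \<Rightarrow> real^'n \<Rightarrow> real) \<Rightarrow> 'n \<Rightarrow> 'n \<Rightarrow> 'n \<Rightarrow> real^'n \<Rightarrow> real" where
  "cov_ric g k i j x = pd k (ric g i j) x
     - (\<Sum>m\<in>UNIV. chr g m k i x * ric g m j x + chr g m k j x * ric g i m x)"

definition cotton :: "('n::finite \<Rightarrow> 'n \<Rightarrow> real^'n \<Rightarrow> real) \<Rightarrow> 'n \<Rightarrow> 'n \<Rightarrow> 'n \<Rightarrow> real^'n \<Rightarrow> real" where
  "cotton g i j k x = cov_ric g k i j x - cov_ric g j i k x
     - (1 / (2 * (real CARD('n) - 1))) * (g i j x * pd k (scal g) x - g i k x * pd j (scal g) x)"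

definition norm3 :: "('n::finite \<Rightarrow> 'n \<Rightarrow> real^'n \<Rightarrow> real) \<Rightarrow> real^'n \<Rightarrow> ('n \<Rightarrow> 'n \<Rightarrow> 'n \<Rightarrow> real) \<Rightarrow> real" where
  "norm3 g x T = (\<Sum>i\<in>UNIV. \<Sum>j\<in>UNIV. \<Sum>k\<in>UNIV. \<Sum>a\<in>UNIV. \<Sum>b\<in>UNIV. \<Sum>c\<in>UNIV.
      ginv g i a x * ginv g j b x * ginv g k c x * T i j k * T a b c)"

definition norm1 :: "('n::finite \<Rightarrow> 'n \<Rightarrow> real^'n \<Rightarrow> real) \<Rightarrow> real^'n \<Rightarrow> ('n \<Rightarrow> real) \<Rightarrow> real" where
  "norm1 g x V = (\<Sum>a\<in>UNIV. \<Sum>b\<in>UNIV. ginv g a b x * V a * V b)"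

definition Grho :: "('n::finite \<Rightarrow> 'n \<Rightarrow> real^'n \<Rightarrow> real) \<Rightarrow> (real^'n \<Rightarrow> real) \<Rightarrow> real \<Rightarrow> real^'n \<Rightarrow> real" where
  "Grho g F \<rho> x = norm1 g x (\<lambda>a. pd a F x) + 2 * \<rho> * F x"

end

theory Submission
  imports Defs
begin

text \<open>Since the Weyl tensor vanishes, the curvature tensor is the Kulkarni--Nomizu combination of
  the Ricci tensor and the metric. The soliton equation turns \<open>\<nabla>Ric\<close> into the third covariant
  derivative of \<open>F\<close>, so the Ricci identity gives \<open>\<nabla>\<^sub>kR\<^sub>i\<^sub>j - \<nabla>\<^sub>jR\<^sub>i\<^sub>k = -R\<^sub>k\<^sub>j\<^sub>i\<^sup>e\<nabla>\<^sub>eF\<close>, which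
  is thereby expressed through \<open>Ric\<close>, \<open>\<nabla>F\<close> and \<open>Ric(\<nabla>F)\<close>. Tracing and comparing with the
  contracted second Bianchi identity \<open>2 div Ric = \<nabla>R\<close> yields \<open>\<nabla>R = -2 Ric(\<nabla>F)\<close>, while the
  soliton equation gives \<open>\<nabla>G\<^sub>\<rho> = 2 Ric(\<nabla>F)\<close>. Hence
  \<open>(n-2) C = A + (g \<and> V)/(n-1)\<close> with \<open>A\<^sub>i\<^sub>j\<^sub>k = R\<^sub>i\<^sub>k\<nabla>\<^sub>jF - R\<^sub>i\<^sub>j\<nabla>\<^sub>kF\<close> and
  \<open>V = R\<nabla>F - \<nabla>G\<^sub>\<rho>/2\<close>; since \<open>V\<close> is (up to sign) a trace of \<open>A\<close>, expanding \<open>|C|\<^sup>2\<close> gives the formula.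
  Everything is computed in one chart; the second Bianchi identity itself is derived from the
  Ricci identities for covariant derivatives, using symmetry of second partial derivatives.\<close>

lemma pd_cong_open:
  assumes "open U" "x \<in> U" "\<And>y. y \<in> U \<Longrightarrow> f y = h y"
  shows "pd k f x = pd k h x"
proof -
  have "(f has_derivative D) (at x) = (h has_derivative D) (at x)" for D
    using has_derivative_transform_within_open[of f D x UNIV U h, OF _ assms(1,2)]
          has_derivative_transform_within_open[of h D x UNIV U f, OF _ assms(1,2)] assms(3)
    by auto
  then show ?thesis unfolding pd_def frechet_derivative_def by simp
qed

lemma pd_has_derivative: "(f has_derivative D) (at x) \<Longrightarrow> pd k f x = D (axis k 1)"
  unfolding pd_def by (metis frechet_derivative_at)

lemma has_frechet_derivative: "f differentiable at x \<Longrightarrow> (f has_derivative frechet_derivative f (at x)) (at x)"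
  using frechet_derivative_works by auto

lemma pd_const [simp]: "pd k (\<lambda>y. c) x = 0"
  by (subst pd_has_derivative[of _ "\<lambda>v. 0"]) (auto intro: derivative_eq_intros)

lemma pd_add:
  assumes "f differentiable at x" "h differentiable at x"
  shows "pd k (\<lambda>y. f y + h y) x = pd k f x + pd k h x"
  using pd_has_derivative[OF has_derivative_add[OF has_frechet_derivative[OF assms(1)] has_frechet_derivative[OF assms(2)]], of k]
  unfolding pd_def by simp

lemma pd_diff:
  assumes "f differentiable at x" "h differentiable at x"
  shows "pd k (\<lambda>y. f y - h y) x = pd k f x - pd k h x"
  using pd_has_derivative[OF has_derivative_diff[OF has_frechet_derivative[OF assms(1)] has_frechet_derivative[OF assms(2)]], of k]
  unfolding pd_def by simp

lemma pd_mult: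
  assumes "f differentiable at x" "h differentiable at x"
  shows "pd k (\<lambda>y. f y * h y) x = pd k f x * h x + f x * pd k h x"
  using pd_has_derivative[OF has_derivative_mult[OF has_frechet_derivative[OF assms(1)] has_frechet_derivative[OF assms(2)]], of k]
  unfolding pd_def by (simp add: algebra_simps)

lemma pd_cmult:
  assumes "f differentiable at x"
  shows "pd k (\<lambda>y. c * f y) x = c * pd k f x"
  using pd_mult[OF _ assms, of "\<lambda>_. c"] by simp

lemma pd_sum:
  assumes "\<And>i. i \<in> S \<Longrightarrow> f i differentiable at x"
  shows "pd k (\<lambda>y. \<Sum>i\<in>S. f i y) x = (\<Sum>i\<in>S. pd k (f i) x)"
proof (cases "finite S")
  case True
  have "((\<lambda>y. \<Sum>i\<in>S. f i y) has_derivative (\<lambda>v. \<Sum>i\<in>S. frechet_derivative (f i) (at x) v)) (at x)"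
    by (rule has_derivative_sum) (use assms has_frechet_derivative in auto)
  from pd_has_derivative[OF this, of k] show ?thesis unfolding pd_def by simp
qed simp

lemma pd_divide_power:
  assumes "p differentiable at y" "d differentiable at y" "d y \<noteq> 0"
  shows "pd k (\<lambda>y. p y / d y ^ j) y
       = (pd k p y * d y ^ j - p y * (of_nat j * pd k d y * d y ^ (j - 1))) / d y ^ (2 * j)"
proof -
  have "((\<lambda>y. p y / d y ^ j) has_derivative (\<lambda>h. (frechet_derivative p (at y) h * d y ^ j
          - p y * (of_nat j * frechet_derivative d (at y) h * d y ^ (j - 1))) / (d y ^ j * d y ^ j))) (at y)"
    by (rule has_derivative_divide'[OF has_frechet_derivative[OF assms(1)]
          has_derivative_power[OF has_frechet_derivative[OF assms(2)]]]) (simp add: assms(3))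
  from pd_has_derivative[OF this, of k] show ?thesis
    unfolding pd_def by (simp only: mult_2 power_add)
qed

lemma pds_append: "pds (ks @ [k]) f = pds ks (pd k f)"
  by (induction ks) auto

lemma pds_cong_open:
  assumes "open U" "\<And>y. y \<in> U \<Longrightarrow> f y = h y" "x \<in> U"
  shows "pds ks f x = pds ks h x"
  using assms(3)
proof (induction ks arbitrary: x)
  case Nil
  then show ?case using assms by simp
next
  case (Cons k ks)
  then show ?case using pd_cong_open[OF assms(1) Cons.prems, of "pds ks f" "pds ks h"] by simp
qed

lemma differentiable_on_cong_open:
  assumes "open U" "\<And>y. y \<in> U \<Longrightarrow> f y = h y" "f differentiable_on U"
  shows "h differentiable_on U"
  unfolding differentiable_on_eq_differentiable_at[OF assms(1)]
proof
  fix y assume y: "y \<in> U"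
  then obtain D where "(f has_derivative D) (at y)"
    using assms(3) unfolding differentiable_on_eq_differentiable_at[OF assms(1)] differentiable_def by blast
  then have "(h has_derivative D) (at y)"
    using has_derivative_transform_within_open[of f D y UNIV U h, OF _ assms(1) y] assms(2) by auto
  then show "h differentiable at y" unfolding differentiable_def by blast
qed

subsection \<open>Symmetry of second partial derivatives\<close>

lemma has_real_derivative_along_line:
  fixes f :: "'a::real_normed_vector \<Rightarrow> real"
  assumes "f differentiable at (p + t *\<^sub>R u)"
  shows "((\<lambda>t. f (p + t *\<^sub>R u)) has_real_derivative frechet_derivative f (at (p + t *\<^sub>R u)) u) (at t)"
proof -
  have fd: "(f has_derivative frechet_derivative f (at (p + t *\<^sub>R u))) (at (p + t *\<^sub>R u))"
    using assms frechet_derivative_works by blast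
  have "((\<lambda>t. p + t *\<^sub>R u) has_derivative (\<lambda>h. h *\<^sub>R u)) (at t)"
    by (auto intro!: derivative_eq_intros)
  from has_derivative_compose[OF this fd]
  have "((\<lambda>t. f (p + t *\<^sub>R u)) has_derivative (\<lambda>h. frechet_derivative f (at (p + t *\<^sub>R u)) (h *\<^sub>R u))) (at t)"
    by (simp add: o_def)
  moreover have "frechet_derivative f (at (p + t *\<^sub>R u)) (h *\<^sub>R u) = frechet_derivative f (at (p + t *\<^sub>R u)) u * h" for h
    using linear_scale[OF has_derivative_linear[OF fd]] by simp
  ultimately show ?thesis unfolding has_field_derivative_def by (simp add: mult_commute_abs)
qed

lemma second_difference_mvt:
  fixes f :: "'a::real_normed_vector \<Rightarrow> real"
  assumes s: "0 < s"
    and fd: "\<And>t c. 0 \<le> t \<Longrightarrow> t \<le> s \<Longrightarrow> 0 \<le> c \<Longrightarrow> c \<le> s \<Longrightarrow> f differentiable at (x + c *\<^sub>R v + t *\<^sub>R u)"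
  shows "\<exists>\<tau>. 0 < \<tau> \<and> \<tau> < s \<and> (f (x + s *\<^sub>R v + s *\<^sub>R u) - f (x + s *\<^sub>R u)) - (f (x + s *\<^sub>R v) - f x)
           = s * (frechet_derivative f (at (x + s *\<^sub>R v + \<tau> *\<^sub>R u)) u - frechet_derivative f (at (x + \<tau> *\<^sub>R u)) u)"
proof -
  define G where "G y = frechet_derivative f (at y) u" for y
  define \<phi> where "\<phi> t = f (x + s *\<^sub>R v + t *\<^sub>R u) - f (x + 0 *\<^sub>R v + t *\<^sub>R u)" for t
  have "(\<phi> has_real_derivative G (x + s *\<^sub>R v + t *\<^sub>R u) - G (x + 0 *\<^sub>R v + t *\<^sub>R u)) (at t)"
    if "0 \<le> t" "t \<le> s" for t
    unfolding \<phi>_def G_def using s that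
    by (intro DERIV_diff has_real_derivative_along_line fd) auto
  then obtain \<tau> where "0 < \<tau>" "\<tau> < s"
      "\<phi> s - \<phi> 0 = (s - 0) * (G (x + s *\<^sub>R v + \<tau> *\<^sub>R u) - G (x + 0 *\<^sub>R v + \<tau> *\<^sub>R u))"
    using MVT2[of 0 s \<phi> "\<lambda>t. G (x + s *\<^sub>R v + t *\<^sub>R u) - G (x + 0 *\<^sub>R v + t *\<^sub>R u)"] s by auto
  then show ?thesis unfolding \<phi>_def G_def by auto
qed

lemma norm_combination_le:
  fixes u v :: "'a::real_normed_vector"
  assumes "norm u \<le> 1" "norm v \<le> 1" "0 \<le> c" "0 \<le> t"
  shows "norm (c *\<^sub>R v + t *\<^sub>R u) \<le> c + t"
proof -
  have "norm (c *\<^sub>R v) \<le> c" "norm (t *\<^sub>R u) \<le> t"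
    using assms mult_left_le[of _ c] mult_left_le[of _ t] by auto
  then show ?thesis using norm_triangle_ineq[of "c *\<^sub>R v" "t *\<^sub>R u"] by linarith
qed

lemma second_difference_approx:
  fixes f :: "'a::real_normed_vector \<Rightarrow> real"
  assumes U: "open U" "x \<in> U" and fd: "\<And>y. y \<in> U \<Longrightarrow> f differentiable at y"
    and nu: "norm u \<le> 1" and nv: "norm v \<le> 1"
    and L: "((\<lambda>y. frechet_derivative f (at y) u) has_derivative L) (at x)"
    and e: "e > 0"
  shows "\<exists>d>0. \<forall>s. 0 < s \<and> s < d \<longrightarrow>
     \<bar>(f (x + s *\<^sub>R v + s *\<^sub>R u) - f (x + s *\<^sub>R u)) - (f (x + s *\<^sub>R v) - f x) - s\<^sup>2 * L v\<bar> \<le> 3 * e * s\<^sup>2"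
proof -
  define G where "G y = frechet_derivative f (at y) u" for y
  have lin: "linear L" using L has_derivative_linear by blast
  obtain d1 where d1: "d1 > 0" "\<And>y. norm (y - x) < d1 \<Longrightarrow> norm (G y - G x - L (y - x)) \<le> e * norm (y - x)"
    using L e unfolding has_derivative_at_alt G_def by blast
  obtain d2 where d2: "d2 > 0" "ball x d2 \<subseteq> U" using U openE by blast
  define d where "d = min d1 d2 / 2"
  have "\<bar>(f (x + s *\<^sub>R v + s *\<^sub>R u) - f (x + s *\<^sub>R u)) - (f (x + s *\<^sub>R v) - f x) - s\<^sup>2 * L v\<bar> \<le> 3 * e * s\<^sup>2"
    if s: "0 < s" "s < d" for s
  proof -
    have near: "norm ((x + c *\<^sub>R v + t *\<^sub>R u) - x) \<le> c + t" if "0 \<le> c" "0 \<le> t" for c t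
      using norm_combination_le[OF nu nv that] by (simp add: add.assoc)
    have "f differentiable at (x + c *\<^sub>R v + t *\<^sub>R u)"
      if "0 \<le> t" "t \<le> s" "0 \<le> c" "c \<le> s" for t c
    proof -
      have "norm ((x + c *\<^sub>R v + t *\<^sub>R u) - x) < d2"
        using near[of c t] that s d_def by linarith
      then have "dist x (x + c *\<^sub>R v + t *\<^sub>R u) < d2"
        by (metis dist_norm norm_minus_commute)
      then show ?thesis using d2 fd by auto
    qed
    then obtain \<tau> where \<tau>: "0 < \<tau>" "\<tau> < s"
      and mvt: "(f (x + s *\<^sub>R v + s *\<^sub>R u) - f (x + s *\<^sub>R u)) - (f (x + s *\<^sub>R v) - f x)
                = s * (G (x + s *\<^sub>R v + \<tau> *\<^sub>R u) - G (x + \<tau> *\<^sub>R u))"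
      using second_difference_mvt[OF s(1)] unfolding G_def by blast
    define y1 where "y1 = x + s *\<^sub>R v + \<tau> *\<^sub>R u"
    define y2 where "y2 = x + 0 *\<^sub>R v + \<tau> *\<^sub>R u"
    have n1: "norm (y1 - x) \<le> 2 * s" using near[of s \<tau>] \<tau> s unfolding y1_def by simp
    have n2: "norm (y2 - x) \<le> s" using near[of 0 \<tau>] \<tau> unfolding y2_def by linarith
    have "\<bar>G y1 - G x - L (y1 - x)\<bar> \<le> e * norm (y1 - x)"
      using d1(2)[of y1] n1 s d_def by force
    moreover have "\<bar>G y2 - G x - L (y2 - x)\<bar> \<le> e * norm (y2 - x)"
      using d1(2)[of y2] n2 s d_def by force
    moreover have "L (y1 - x) - L (y2 - x) = s * L v"
      using linear_diff[OF lin, of "y1 - x" "y2 - x"] linear_scale[OF lin, of s v]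
      by (simp add: y1_def y2_def)
    ultimately have "\<bar>(G y1 - G y2) - s * L v\<bar> \<le> e * norm (y1 - x) + e * norm (y2 - x)"
      by linarith
    also have "\<dots> \<le> e * (2 * s) + e * s"
      using n1 n2 e by (intro add_mono mult_left_mono) auto
    finally have bound: "s * \<bar>(G y1 - G y2) - s * L v\<bar> \<le> s * (3 * e * s)"
      using s by (intro mult_left_mono) auto
    have "(f (x + s *\<^sub>R v + s *\<^sub>R u) - f (x + s *\<^sub>R u)) - (f (x + s *\<^sub>R v) - f x) - s\<^sup>2 * L v
          = s * ((G y1 - G y2) - s * L v)"
      using mvt unfolding y1_def y2_def by (simp add: power2_eq_square algebra_simps)
    then show ?thesis using bound s by (simp add: abs_mult power2_eq_square mult_ac)
  qed
  moreover have "d > 0" using d1 d2 d_def by auto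
  ultimately show ?thesis by blast
qed

lemma pd_commute:
  fixes f :: "real^'n::finite \<Rightarrow> real"
  assumes U: "open U" "x \<in> U" and fd: "\<And>y. y \<in> U \<Longrightarrow> f differentiable at y"
    and di: "pd i f differentiable at x" and dj: "pd j f differentiable at x"
  shows "pd i (pd j f) x = pd j (pd i f) x"
proof -
  define u where "u = (axis i 1 :: real^'n)"
  define v where "v = (axis j 1 :: real^'n)"
  have nuv: "norm u \<le> 1" "norm v \<le> 1" unfolding u_def v_def by simp_all
  define A where "A = pd j (pd i f) x"
  define B where "B = pd i (pd j f) x"
  have LA: "((\<lambda>y. frechet_derivative f (at y) u) has_derivative frechet_derivative (pd i f) (at x)) (at x)"
    using frechet_derivative_works di unfolding pd_def u_def by blast
  have LB: "((\<lambda>y. frechet_derivative f (at y) v) has_derivative frechet_derivative (pd j f) (at x)) (at x)"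
    using frechet_derivative_works dj unfolding pd_def v_def by blast
  have A: "frechet_derivative (pd i f) (at x) v = A" unfolding A_def pd_def v_def ..
  have B: "frechet_derivative (pd j f) (at x) u = B" unfolding B_def pd_def u_def ..
  have "\<bar>A - B\<bar> \<le> 6 * e" if e: "e > 0" for e
  proof -
    obtain d1 where d1: "d1 > 0" "\<forall>s. 0 < s \<and> s < d1 \<longrightarrow>
       \<bar>(f (x + s *\<^sub>R v + s *\<^sub>R u) - f (x + s *\<^sub>R u)) - (f (x + s *\<^sub>R v) - f x) - s\<^sup>2 * A\<bar> \<le> 3 * e * s\<^sup>2"
      using second_difference_approx[OF U fd nuv LA e] A by auto
    obtain d2 where d2: "d2 > 0" "\<forall>s. 0 < s \<and> s < d2 \<longrightarrow>
       \<bar>(f (x + s *\<^sub>R u + s *\<^sub>R v) - f (x + s *\<^sub>R v)) - (f (x + s *\<^sub>R u) - f x) - s\<^sup>2 * B\<bar> \<le> 3 * e * s\<^sup>2"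
      using second_difference_approx[OF U fd nuv(2,1) LB e] B by auto
    define s where "s = min d1 d2 / 2"
    have s: "0 < s" "s < d1" "s < d2" using d1 d2 s_def by auto
    have swap: "x + s *\<^sub>R u + s *\<^sub>R v = x + s *\<^sub>R v + s *\<^sub>R u" by (simp add: algebra_simps)
    have "\<bar>s\<^sup>2 * A - s\<^sup>2 * B\<bar> \<le> 6 * e * s\<^sup>2"
      using d1(2)[rule_format, of s] d2(2)[rule_format, of s] s unfolding swap by linarith
    then have "s\<^sup>2 * \<bar>A - B\<bar> \<le> s\<^sup>2 * (6 * e)"
      by (simp add: abs_mult left_diff_distrib[symmetric] mult.commute mult.left_commute)
    then show ?thesis using s by (simp add: mult_le_cancel_left)
  qed
  note small = this
  have "A = B"
  proof (rule ccontr)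
    assume "A \<noteq> B"
    then show False using small[of "\<bar>A - B\<bar> / 12"] by simp
  qed
  then show ?thesis unfolding A_def B_def by simp
qed

locale chart =
  fixes U :: "(real^'n::finite) set"
  assumes openU: "open U"
begin

lemma smooth_on_differentiable_on: "smooth_on U f \<Longrightarrow> f differentiable_on U"
  unfolding smooth_on_def by (metis pds.simps(1))

lemma smooth_on_differentiable: "smooth_on U f \<Longrightarrow> x \<in> U \<Longrightarrow> f differentiable at x"
  using smooth_on_differentiable_on differentiable_on_eq_differentiable_at[OF openU] by blast

lemma smooth_on_pd: "smooth_on U f \<Longrightarrow> smooth_on U (pd k f)"
  unfolding smooth_on_def by (metis pds_append)

lemma smooth_on_closed_class:
  assumes "\<And>f. f \<in> C \<Longrightarrow> f differentiable_on U"
    and "\<And>f k. f \<in> C \<Longrightarrow> \<exists>h\<in>C. \<forall>y\<in>U. pd k f y = h y"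
    and "f \<in> C"
  shows "smooth_on U f"
proof -
  have "\<exists>h\<in>C. \<forall>y\<in>U. pds ks f y = h y" for ks
  proof (induction ks)
    case Nil then show ?case using assms(3) by auto
  next
    case (Cons k ks)
    then obtain h where h: "h \<in> C" "\<forall>y\<in>U. pds ks f y = h y" by blast
    obtain h' where h': "h' \<in> C" "\<forall>y\<in>U. pd k h y = h' y" using assms(2)[OF h(1)] by blast
    have "\<forall>y\<in>U. pds (k # ks) f y = h' y"
      using pd_cong_open[OF openU, of _ "pds ks f" h k] h h' by auto
    then show ?case using h' by blast
  qed
  then show ?thesis unfolding smooth_on_def
    using differentiable_on_cong_open[OF openU] assms(1) by metis
qed

lemma smooth_on_cong: "smooth_on U f \<Longrightarrow> (\<And>y. y \<in> U \<Longrightarrow> f y = h y) \<Longrightarrow> smooth_on U h"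
  unfolding smooth_on_def
  using pds_cong_open[OF openU, of f h] differentiable_on_cong_open[OF openU] by metis

lemma smooth_on_const[simp, intro]: "smooth_on U (\<lambda>y. c)"
proof (rule smooth_on_closed_class[where C="{\<lambda>y. c| c. True}"])
  show "f \<in> {\<lambda>y. c |c. True} \<Longrightarrow> f differentiable_on U" for f by auto
  show "f \<in> {\<lambda>y. c |c. True} \<Longrightarrow> \<exists>h\<in>{\<lambda>y. c |c. True}. \<forall>y\<in>U. pd k f y = h y" for f k
    by auto
qed auto

text \<open>Closure under products is proved for the larger class of finite sums of products of
  smooth functions, which is closed under partial differentiation by the Leibniz rule.\<close>

inductive_set smooth_sums :: "(real^'n \<Rightarrow> real) set" where
  zero: "(\<lambda>y. 0) \<in> smooth_sums"
| add_product: "smooth_on U a \<Longrightarrow> smooth_on U b \<Longrightarrow> c \<in> smooth_sums \<Longrightarrow> (\<lambda>y. a y * b y + c y) \<in> smooth_sums"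

lemma smooth_sums_differentiable_on: "c \<in> smooth_sums \<Longrightarrow> c differentiable_on U"
proof (induction rule: smooth_sums.induct)
  case (add_product a b c)
  then show ?case using smooth_on_differentiable_on[OF add_product(1)] smooth_on_differentiable_on[OF add_product(2)]
    by (intro differentiable_on_add differentiable_on_mult) auto
qed simp

lemma smooth_sums_pd: "c \<in> smooth_sums \<Longrightarrow> \<exists>h\<in>smooth_sums. \<forall>y\<in>U. pd k c y = h y"
proof (induction rule: smooth_sums.induct)
  case zero then show ?case using smooth_sums.zero by auto
next
  case (add_product a b c)
  then obtain h where h: "h \<in> smooth_sums" "\<forall>y\<in>U. pd k c y = h y" by blast
  let ?h = "\<lambda>y. pd k a y * b y + (a y * pd k b y + h y)"
  have "?h \<in> smooth_sums" using add_product smooth_on_pd h by (intro smooth_sums.add_product) auto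
  moreover have "\<forall>y\<in>U. pd k (\<lambda>y. a y * b y + c y) y = ?h y"
  proof
    fix y assume y: "y \<in> U"
    have da: "a differentiable at y" "b differentiable at y" using add_product smooth_on_differentiable y by auto
    have dc: "c differentiable at y" using add_product(3) smooth_sums_differentiable_on differentiable_on_eq_differentiable_at[OF openU] y by blast
    show "pd k (\<lambda>y. a y * b y + c y) y = ?h y"
      using pd_add[OF differentiable_mult[OF da] dc, of k] pd_mult[OF da, of k] h y by simp
  qed
  ultimately show ?case by (intro bexI[of _ ?h]) auto
qed

lemma smooth_on_smooth_sums: "c \<in> smooth_sums \<Longrightarrow> smooth_on U c"
  using smooth_on_closed_class[of smooth_sums] smooth_sums_differentiable_on smooth_sums_pd by blast

lemma smooth_on_mult[intro]: "smooth_on U a \<Longrightarrow> smooth_on U b \<Longrightarrow> smooth_on U (\<lambda>y. a y * b y)"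
  using smooth_on_smooth_sums[OF smooth_sums.add_product[OF _ _ smooth_sums.zero, of a b]] by simp

lemma smooth_on_add[intro]: "smooth_on U a \<Longrightarrow> smooth_on U b \<Longrightarrow> smooth_on U (\<lambda>y. a y + b y)"
  using smooth_on_smooth_sums[OF smooth_sums.add_product[OF _ _ smooth_sums.add_product[OF _ _ smooth_sums.zero], of a "\<lambda>_. 1" b "\<lambda>_. 1"]] by simp

lemma smooth_on_minus[intro]: "smooth_on U a \<Longrightarrow> smooth_on U (\<lambda>y. - a y)"
  using smooth_on_mult[of "\<lambda>_. -1" a] by simp

lemma smooth_on_diff[intro]: "smooth_on U a \<Longrightarrow> smooth_on U b \<Longrightarrow> smooth_on U (\<lambda>y. a y - b y)"
  using smooth_on_add[OF _ smooth_on_minus, of a b] by simp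

lemma smooth_on_sum[intro]: "(\<And>i. i \<in> S \<Longrightarrow> smooth_on U (f i)) \<Longrightarrow> smooth_on U (\<lambda>y. \<Sum>i\<in>S. f i y)"
  by (induction S rule: infinite_finite_induct) auto

lemma smooth_on_prod[intro]: "(\<And>i. i \<in> S \<Longrightarrow> smooth_on U (f i)) \<Longrightarrow> smooth_on U (\<lambda>y. \<Prod>i\<in>S. f i y)"
  by (induction S rule: infinite_finite_induct) auto

lemma smooth_on_power[intro]: "smooth_on U a \<Longrightarrow> smooth_on U (\<lambda>y. a y ^ j)"
  by (induction j) auto

lemma smooth_on_inverse:
  assumes d: "smooth_on U d" "\<And>y. y \<in> U \<Longrightarrow> d y \<noteq> 0"
  shows "smooth_on U (\<lambda>y. 1 / d y)"
proof -
  define C where "C = {f. \<exists>p j. f = (\<lambda>y. p y / d y ^ j) \<and> smooth_on U p}"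
  have dd: "y \<in> U \<Longrightarrow> d differentiable at y" for y using smooth_on_differentiable d by blast
  have c1: "(\<lambda>y. 1 / d y) \<in> C" unfolding C_def
    by (rule CollectI, rule exI[of _ "\<lambda>_. 1"], rule exI[of _ 1]) simp
  have c2: "f differentiable_on U" if "f \<in> C" for f
  proof -
    obtain p j where f: "f = (\<lambda>y. p y / d y ^ j)" "smooth_on U p" using \<open>f \<in> C\<close> unfolding C_def by blast
    show ?thesis unfolding f differentiable_on_eq_differentiable_at[OF openU]
    proof
      fix y assume y: "y \<in> U"
      show "(\<lambda>y. p y / d y ^ j) differentiable at y"
        by (rule differentiable_divide[OF smooth_on_differentiable[OF f(2) y] differentiable_power[OF dd[OF y]]])
           (simp add: d(2)[OF y])
    qed
  qed
  have c3: "\<exists>h\<in>C. \<forall>y\<in>U. pd k f y = h y" if "f \<in> C" for f k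
  proof -
    obtain p j where f: "f = (\<lambda>y. p y / d y ^ j)" "smooth_on U p" using \<open>f \<in> C\<close> unfolding C_def by blast
    define q where "q = (\<lambda>y. pd k p y * d y ^ j - p y * (of_nat j * pd k d y * d y ^ (j - 1)))"
    have "smooth_on U q"
      unfolding q_def by (intro smooth_on_diff smooth_on_mult smooth_on_pd smooth_on_power smooth_on_const f(2) d(1))
    then have "(\<lambda>y. q y / d y ^ (2 * j)) \<in> C"
      unfolding C_def by (intro CollectI exI[of _ q] exI[of _ "2 * j"]) simp
    moreover have "pd k f y = q y / d y ^ (2 * j)" if y: "y \<in> U" for y
      unfolding f q_def using smooth_on_differentiable[OF f(2) y] dd[OF y] d(2)[OF y] by (rule pd_divide_power)
    ultimately show ?thesis by (intro bexI[of _ "\<lambda>y. q y / d y ^ (2 * j)"]) auto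
  qed
  show ?thesis by (rule smooth_on_closed_class[of C, OF c2 c3 c1])
qed

lemma smooth_on_If: "smooth_on U f \<Longrightarrow> smooth_on U h \<Longrightarrow> smooth_on U (\<lambda>y. if P then f y else h y)"
  by (cases P) auto

lemma smooth_on_det:
  assumes "\<And>a c. smooth_on U (\<lambda>y. M y $ a $ c)"
  shows "smooth_on U (\<lambda>y. det (M y))"
  unfolding det_def
  by (rule smooth_on_sum, rule smooth_on_mult[OF smooth_on_const], rule smooth_on_prod, rule assms)

end

lemma sum_delta_mult [simp]:
  "(\<Sum>m\<in>UNIV. (if i = m then 1 else 0) * h m) = (h (i::'n::finite) :: 'a::comm_semiring_1)"
  by (subst sum.cong[where h="\<lambda>m. if i = m then h m else 0"]) auto

lemma sum_delta_mult' [simp]: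
  "(\<Sum>m\<in>UNIV. (if m = i then 1 else 0) * h m) = (h (i::'n::finite) :: 'a::comm_semiring_1)"
  by (subst sum.cong[where h="\<lambda>m. if i = m then h m else 0"]) auto

lemma sum_mult_delta [simp]:
  "(\<Sum>m\<in>UNIV. h m * (if i = m then 1 else 0)) = (h (i::'n::finite) :: 'a::comm_semiring_1)"
  by (subst sum.cong[where h="\<lambda>m. if i = m then h m else 0"]) auto

lemma sum_mult_delta' [simp]:
  "(\<Sum>m\<in>UNIV. h m * (if m = i then 1 else 0)) = (h (i::'n::finite) :: 'a::comm_semiring_1)"
  by (subst sum.cong[where h="\<lambda>m. if i = m then h m else 0"]) auto

lemma sum_mult_sum_swap:
  "(\<Sum>k\<in>A. a k * (\<Sum>m\<in>B. b k m * c m)) = (\<Sum>m\<in>B. (\<Sum>k\<in>A. a k * b k m) * (c m :: 'a::comm_semiring_0))"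
proof -
  have "(\<Sum>k\<in>A. a k * (\<Sum>m\<in>B. b k m * c m)) = (\<Sum>k\<in>A. \<Sum>m\<in>B. a k * b k m * c m)"
    by (simp add: sum_distrib_left mult.assoc)
  also have "\<dots> = (\<Sum>m\<in>B. \<Sum>k\<in>A. a k * b k m * c m)" by (rule sum.swap)
  also have "\<dots> = (\<Sum>m\<in>B. (\<Sum>k\<in>A. a k * b k m) * c m)" by (simp add: sum_distrib_right)
  finally show ?thesis .
qed

lemma sum_mult_sum_swap':
  "(\<Sum>m\<in>A. a m * (\<Sum>p\<in>B. b p * S p m)) = (\<Sum>m\<in>B. b m * (\<Sum>p\<in>A. a p * (S m p :: 'a::comm_semiring_0)))"
proof -
  have "(\<Sum>m\<in>A. a m * (\<Sum>p\<in>B. b p * S p m)) = (\<Sum>m\<in>A. \<Sum>p\<in>B. b p * (a m * S p m))"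
    by (simp add: sum_distrib_left mult_ac)
  also have "\<dots> = (\<Sum>p\<in>B. \<Sum>m\<in>A. b p * (a m * S p m))" by (rule sum.swap)
  also have "\<dots> = (\<Sum>m\<in>B. b m * (\<Sum>p\<in>A. a p * S m p))" by (simp add: sum_distrib_left)
  finally show ?thesis .
qed

lemma sum_sum_mult_swap:
  "(\<Sum>e\<in>A. (\<Sum>m\<in>B. a e m * b m) * w e) = (\<Sum>m\<in>B. b m * (\<Sum>e\<in>A. a e m * (w e :: 'a::comm_semiring_0)))"
proof -
  have "(\<Sum>e\<in>A. (\<Sum>m\<in>B. a e m * b m) * w e) = (\<Sum>e\<in>A. \<Sum>m\<in>B. a e m * b m * w e)"
    by (simp add: sum_distrib_right)
  also have "\<dots> = (\<Sum>m\<in>B. \<Sum>e\<in>A. a e m * b m * w e)" by (rule sum.swap)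
  also have "\<dots> = (\<Sum>m\<in>B. b m * (\<Sum>e\<in>A. a e m * w e))"
    by (simp add: sum_distrib_left mult_ac)
  finally show ?thesis .
qed

lemma sum_sum_mult_swap':
  "(\<Sum>e\<in>A. (\<Sum>m\<in>B. a m * b m e) * w e) = (\<Sum>m\<in>B. a m * (\<Sum>e\<in>A. b m e * (w e :: 'a::comm_semiring_0)))"
proof -
  have "(\<Sum>e\<in>A. (\<Sum>m\<in>B. a m * b m e) * w e) = (\<Sum>e\<in>A. \<Sum>m\<in>B. a m * (b m e * w e))"
    by (simp add: sum_distrib_right mult.assoc)
  also have "\<dots> = (\<Sum>m\<in>B. \<Sum>e\<in>A. a m * (b m e * w e))" by (rule sum.swap)
  also have "\<dots> = (\<Sum>m\<in>B. a m * (\<Sum>e\<in>A. b m e * w e))" by (simp add: sum_distrib_left)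
  finally show ?thesis .
qed

lemma sum_swap_inner:
  "(\<Sum>c\<in>A. \<Sum>d\<in>B. \<Sum>m\<in>C. f c d m) = (\<Sum>c\<in>A. \<Sum>m\<in>C. \<Sum>d\<in>B. (f c d m :: 'a::comm_monoid_add))"
  by (rule sum.cong[OF refl], rule sum.swap)

lemma sum_rotate3:
  "(\<Sum>i\<in>A. \<Sum>j\<in>B. \<Sum>k\<in>C. f i j k) = (\<Sum>k\<in>C. \<Sum>i\<in>A. \<Sum>j\<in>B. (f i j k :: 'a::comm_monoid_add))"
  by (subst sum_swap_inner) (rule sum.swap)

lemma sum_rotate3':
  "(\<Sum>i\<in>A. \<Sum>j\<in>B. \<Sum>k\<in>C. f i j k) = (\<Sum>j\<in>B. \<Sum>k\<in>C. \<Sum>i\<in>A. (f i j k :: 'a::comm_monoid_add))"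
  by (subst sum.swap) (rule sum.cong[OF refl], rule sum.swap)

lemma sum_reverse3:
  "(\<Sum>c\<in>A. \<Sum>d\<in>B. \<Sum>m\<in>C. f c d m) = (\<Sum>m\<in>C. \<Sum>d\<in>B. \<Sum>c\<in>A. (f c d m :: 'a::comm_monoid_add))"
  by (subst sum_rotate3) (rule sum.cong[OF refl], rule sum.swap)

lemma sum_pull_innermost:
  "(\<Sum>a\<in>A. \<Sum>b\<in>B. \<Sum>c\<in>C. \<Sum>i\<in>I. g a b c i) = (\<Sum>i\<in>I. \<Sum>a\<in>A. \<Sum>b\<in>B. \<Sum>c\<in>C. (g a b c i :: 'a::comm_monoid_add))"
proof -
  have "(\<Sum>a\<in>A. \<Sum>b\<in>B. \<Sum>c\<in>C. \<Sum>i\<in>I. g a b c i) = (\<Sum>a\<in>A. \<Sum>i\<in>I. \<Sum>b\<in>B. \<Sum>c\<in>C. g a b c i)"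
    by (intro sum.cong refl sum_rotate3)
  then show ?thesis by (simp only: sum.swap[of _ A])
qed

lemma sum_swap_3_3:
  "(\<Sum>a\<in>A. \<Sum>b\<in>B. \<Sum>c\<in>C. \<Sum>i\<in>I. \<Sum>j\<in>J. \<Sum>k\<in>K. f a b c i j k)
   = (\<Sum>i\<in>I. \<Sum>j\<in>J. \<Sum>k\<in>K. \<Sum>a\<in>A. \<Sum>b\<in>B. \<Sum>c\<in>C. (f a b c i j k :: 'a::comm_monoid_add))"
proof -
  have "(\<Sum>a\<in>A. \<Sum>b\<in>B. \<Sum>c\<in>C. \<Sum>i\<in>I. \<Sum>j\<in>J. \<Sum>k\<in>K. f a b c i j k)
     = (\<Sum>i\<in>I. \<Sum>a\<in>A. \<Sum>b\<in>B. \<Sum>c\<in>C. \<Sum>j\<in>J. \<Sum>k\<in>K. f a b c i j k)"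
    by (rule sum_pull_innermost)
  also have "\<dots> = (\<Sum>i\<in>I. \<Sum>j\<in>J. \<Sum>a\<in>A. \<Sum>b\<in>B. \<Sum>c\<in>C. \<Sum>k\<in>K. f a b c i j k)"
    by (intro sum.cong refl sum_pull_innermost)
  also have "\<dots> = (\<Sum>i\<in>I. \<Sum>j\<in>J. \<Sum>k\<in>K. \<Sum>a\<in>A. \<Sum>b\<in>B. \<Sum>c\<in>C. f a b c i j k)"
    by (intro sum.cong refl sum_pull_innermost)
  finally show ?thesis .
qed

text \<open>Pointwise tensor algebra: \<open>gi\<close> plays the role of the inverse metric \<open>g\<^sup>i\<^sup>j\<close> and, in
  \<open>inverse_pair\<close>, \<open>gg\<close> that of the metric \<open>g\<^sub>i\<^sub>j\<close>.\<close>

locale sym_form =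
  fixes gi :: "'n::finite \<Rightarrow> 'n \<Rightarrow> real"
  assumes gi_sym: "gi i j = gi j i"
begin

definition raise3 :: "('n \<Rightarrow> 'n \<Rightarrow> 'n \<Rightarrow> real) \<Rightarrow> 'n \<Rightarrow> 'n \<Rightarrow> 'n \<Rightarrow> real" where
  "raise3 T i j k = (\<Sum>a\<in>UNIV. \<Sum>b\<in>UNIV. \<Sum>c\<in>UNIV. gi i a * gi j b * gi k c * T a b c)"

definition inner3 :: "('n \<Rightarrow> 'n \<Rightarrow> 'n \<Rightarrow> real) \<Rightarrow> ('n \<Rightarrow> 'n \<Rightarrow> 'n \<Rightarrow> real) \<Rightarrow> real" where
  "inner3 S T = (\<Sum>i\<in>UNIV. \<Sum>j\<in>UNIV. \<Sum>k\<in>UNIV. S i j k * raise3 T i j k)"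

definition norm3sq :: "('n \<Rightarrow> 'n \<Rightarrow> 'n \<Rightarrow> real) \<Rightarrow> real" where
  "norm3sq T = (\<Sum>i\<in>UNIV. \<Sum>j\<in>UNIV. \<Sum>k\<in>UNIV. \<Sum>a\<in>UNIV. \<Sum>b\<in>UNIV. \<Sum>c\<in>UNIV.
      gi i a * gi j b * gi k c * T i j k * T a b c)"

definition norm1sq :: "('n \<Rightarrow> real) \<Rightarrow> real" where
  "norm1sq V = (\<Sum>a\<in>UNIV. \<Sum>b\<in>UNIV. gi a b * V a * V b)"

definition raise1 :: "('n \<Rightarrow> real) \<Rightarrow> 'n \<Rightarrow> real" where
  "raise1 V k = (\<Sum>c\<in>UNIV. gi k c * V c)"

lemma norm3sq_eq_inner3: "norm3sq T = inner3 T T"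
  unfolding norm3sq_def inner3_def raise3_def by (simp add: sum_distrib_left mult_ac)

lemma sum_mult_raise1: "(\<Sum>k\<in>UNIV. V k * raise1 V k) = norm1sq V"
  unfolding norm1sq_def raise1_def by (simp add: sum_distrib_left mult_ac)

lemma inner3_expand:
  "inner3 S T = (\<Sum>i\<in>UNIV. \<Sum>j\<in>UNIV. \<Sum>k\<in>UNIV. \<Sum>a\<in>UNIV. \<Sum>b\<in>UNIV. \<Sum>c\<in>UNIV.
      gi i a * gi j b * gi k c * S i j k * T a b c)"
  unfolding inner3_def raise3_def by (simp add: sum_distrib_left mult_ac)

lemma inner3_commute: "inner3 S T = inner3 T S"
proof -
  have "inner3 S T = (\<Sum>a\<in>UNIV. \<Sum>b\<in>UNIV. \<Sum>c\<in>UNIV. \<Sum>i\<in>UNIV. \<Sum>j\<in>UNIV. \<Sum>k\<in>UNIV.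
      gi i a * gi j b * gi k c * S i j k * T a b c)"
    unfolding inner3_expand by (rule sum_swap_3_3[symmetric])
  also have "\<dots> = (\<Sum>a\<in>UNIV. \<Sum>b\<in>UNIV. \<Sum>c\<in>UNIV. \<Sum>i\<in>UNIV. \<Sum>j\<in>UNIV. \<Sum>k\<in>UNIV.
      gi a i * gi b j * gi c k * T a b c * S i j k)"
    by (intro sum.cong refl, rename_tac a b c i j k,
        subst gi_sym[of a i], subst gi_sym[of b j], subst gi_sym[of c k], simp add: mult_ac)
  also have "\<dots> = inner3 T S" unfolding inner3_expand ..
  finally show ?thesis .
qed

lemma inner3_linear_left:
  "inner3 (\<lambda>i j k. \<alpha> * S1 i j k + \<beta> * S2 i j k) T = \<alpha> * inner3 S1 T + \<beta> * inner3 S2 T"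
  unfolding inner3_def by (simp add: algebra_simps sum.distrib sum_distrib_left)

lemma inner3_linear_right:
  "inner3 T (\<lambda>i j k. \<alpha> * S1 i j k + \<beta> * S2 i j k) = \<alpha> * inner3 T S1 + \<beta> * inner3 T S2"
  by (subst (1 2 3) inner3_commute) (rule inner3_linear_left)

end

locale inverse_pair = sym_form gi for gi :: "'n::finite \<Rightarrow> 'n \<Rightarrow> real" +
  fixes gg :: "'n \<Rightarrow> 'n \<Rightarrow> real"
  assumes gg_sym: "gg i j = gg j i"
    and gi_gg: "(\<Sum>l\<in>UNIV. gi i l * gg l j) = (if i = j then 1 else 0)"
begin

lemma gg_gi: "(\<Sum>l\<in>UNIV. gg i l * gi l j) = (if i = j then 1 else 0)"
proof -
  have "(\<Sum>l\<in>UNIV. gg i l * gi l j) = (\<Sum>l\<in>UNIV. gi j l * gg l i)"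
    by (rule sum.cong) (auto simp: gi_sym gg_sym mult.commute)
  then show ?thesis using gi_gg[of j i] by auto
qed

lemma trace_gg: "(\<Sum>i\<in>UNIV. \<Sum>j\<in>UNIV. gg i j * gi i j) = real CARD('n)"
proof -
  have "(\<Sum>i\<in>UNIV. \<Sum>j\<in>UNIV. gg i j * gi i j) = (\<Sum>i\<in>UNIV. \<Sum>j\<in>UNIV. gg i j * gi j i)"
    by (simp add: gi_sym)
  also have "\<dots> = (\<Sum>i\<in>(UNIV::'n set). 1)" by (simp add: gg_gi)
  finally show ?thesis by simp
qed

lemma gi_gi_gg: "(\<Sum>a\<in>UNIV. gi i a * (\<Sum>b\<in>UNIV. gi j b * gg a b)) = gi i j"
proof -
  have "(\<Sum>b\<in>UNIV. gi j b * gg a b) = (if a = j then 1 else 0)" for a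
    using gg_gi[of a j] by (simp add: gi_sym mult.commute)
  then show ?thesis by simp
qed

lemma raise3_gg12: "raise3 (\<lambda>a b c. gg a b * V c) i j k = gi i j * raise1 V k"
proof -
  have "raise3 (\<lambda>a b c. gg a b * V c) i j k
        = (\<Sum>a\<in>UNIV. gi i a * (\<Sum>b\<in>UNIV. gi j b * gg a b)) * raise1 V k"
    unfolding raise3_def raise1_def by (simp add: sum_distrib_left sum_distrib_right mult_ac)
  then show ?thesis unfolding gi_gi_gg .
qed

lemma raise3_gg13: "raise3 (\<lambda>a b c. gg a c * V b) i j k = gi i k * raise1 V j"
proof -
  have "raise3 (\<lambda>a b c. gg a c * V b) i j k
        = (\<Sum>a\<in>UNIV. \<Sum>c\<in>UNIV. \<Sum>b\<in>UNIV. (gi i a * (gi k c * gg a c)) * (gi j b * V b))"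
    unfolding raise3_def by (intro sum.cong refl sum.swap[THEN trans]) (simp add: mult_ac)
  also have "\<dots> = (\<Sum>a\<in>UNIV. gi i a * (\<Sum>c\<in>UNIV. gi k c * gg a c)) * raise1 V j"
    unfolding raise1_def by (simp add: sum_distrib_left sum_distrib_right mult_ac)
  finally show ?thesis unfolding gi_gi_gg .
qed

text \<open>\<open>g \<and> V\<close>, with the coefficients \<open>1\<close> and \<open>-1\<close> explicit so that the linearity rules for
  \<open>inner3\<close> apply to it.\<close>

definition g_wedge :: "('n \<Rightarrow> real) \<Rightarrow> 'n \<Rightarrow> 'n \<Rightarrow> 'n \<Rightarrow> real" where
  "g_wedge V i j k = 1 * (gg i j * V k) + (-1) * (gg i k * V j)"

lemma inner3_g_wedge:
  assumes tr12: "\<And>k. (\<Sum>i\<in>UNIV. \<Sum>j\<in>UNIV. gi i j * A i j k) = - V k"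
    and tr13: "\<And>j. (\<Sum>i\<in>UNIV. \<Sum>k\<in>UNIV. gi i k * A i j k) = V j"
  shows "inner3 A (g_wedge V) = - 2 * norm1sq V"
proof -
  have "inner3 A (\<lambda>a b c. gg a b * V c) = (\<Sum>k\<in>UNIV. (\<Sum>i\<in>UNIV. \<Sum>j\<in>UNIV. gi i j * A i j k) * raise1 V k)"
    unfolding inner3_def raise3_gg12 sum_rotate3[where f="\<lambda>i j k. A i j k * (gi i j * raise1 V k)"]
    by (simp add: sum_distrib_left sum_distrib_right mult_ac)
  also have "\<dots> = - norm1sq V" unfolding tr12 sum_mult_raise1[symmetric] by (simp add: sum_negf)
  finally have left: "inner3 A (\<lambda>a b c. gg a b * V c) = - norm1sq V" .
  have "inner3 A (\<lambda>a b c. gg a c * V b) = (\<Sum>j\<in>UNIV. (\<Sum>i\<in>UNIV. \<Sum>k\<in>UNIV. gi i k * A i j k) * raise1 V j)"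
    unfolding inner3_def raise3_gg13 sum.swap[where A=UNIV and B=UNIV and g="\<lambda>i j. \<Sum>k\<in>UNIV. A i j k * (gi i k * raise1 V j)"]
    by (simp add: sum_distrib_left mult_ac)
  also have "\<dots> = norm1sq V" unfolding tr13 sum_mult_raise1 ..
  finally have right: "inner3 A (\<lambda>a b c. gg a c * V b) = norm1sq V" .
  show ?thesis unfolding g_wedge_def inner3_linear_right left right by simp
qed

lemma norm3sq_g_wedge: "norm3sq (g_wedge V) = (2 * real CARD('n) - 2) * norm1sq V"
proof -
  have delta: "(\<Sum>i\<in>UNIV. gg i j * gi i k) = (if j = k then 1 else 0)" for j k
    using gg_gi[of j k] by (simp add: gg_sym)
  have "inner3 (\<lambda>a b c. gg a b * V c) (\<lambda>a b c. gg a b * V c)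
        = (\<Sum>i\<in>UNIV. \<Sum>j\<in>UNIV. gg i j * gi i j * (\<Sum>k\<in>UNIV. V k * raise1 V k))"
    unfolding inner3_def raise3_gg12 by (simp add: sum_distrib_left mult_ac)
  also have "\<dots> = real CARD('n) * norm1sq V"
    unfolding sum_mult_raise1 sum_distrib_right[symmetric] trace_gg ..
  finally have "inner3 (\<lambda>a b c. gg a b * V c) (\<lambda>a b c. gg a b * V c) = real CARD('n) * norm1sq V" .
  moreover have "inner3 (\<lambda>a b c. gg a c * V b) (\<lambda>a b c. gg a c * V b) = real CARD('n) * norm1sq V"
  proof -
    have "inner3 (\<lambda>a b c. gg a c * V b) (\<lambda>a b c. gg a c * V b)
          = (\<Sum>i\<in>UNIV. \<Sum>k\<in>UNIV. \<Sum>j\<in>UNIV. gg i k * gi i k * (V j * raise1 V j))"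
      unfolding inner3_def raise3_gg13 by (intro sum.cong refl sum.swap[THEN trans]) (simp add: mult_ac)
    also have "\<dots> = (\<Sum>i\<in>UNIV. \<Sum>k\<in>UNIV. gg i k * gi i k) * (\<Sum>j\<in>UNIV. V j * raise1 V j)"
      by (simp only: sum_distrib_left[symmetric] sum_distrib_right[symmetric])
    finally show ?thesis unfolding sum_mult_raise1 trace_gg .
  qed
  moreover have "inner3 (\<lambda>a b c. gg a b * V c) (\<lambda>a b c. gg a c * V b) = norm1sq V"
  proof -
    have "inner3 (\<lambda>a b c. gg a b * V c) (\<lambda>a b c. gg a c * V b)
          = (\<Sum>j\<in>UNIV. \<Sum>k\<in>UNIV. (\<Sum>i\<in>UNIV. gg i j * gi i k) * (V k * raise1 V j))"
      unfolding inner3_def raise3_gg13 sum_rotate3'[where f="\<lambda>i j k. gg i j * V k * (gi i k * raise1 V j)"]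
      by (simp add: sum_distrib_left sum_distrib_right mult_ac)
    also have "\<dots> = (\<Sum>j\<in>UNIV. V j * raise1 V j)" unfolding delta by (simp add: mult.commute)
    finally show ?thesis unfolding sum_mult_raise1 .
  qed
  ultimately show ?thesis
    unfolding norm3sq_eq_inner3 g_wedge_def inner3_linear_left inner3_linear_right
    using inner3_commute[of "\<lambda>a b c. gg a c * V b" "\<lambda>a b c. gg a b * V c"]
    by (simp add: algebra_simps)
qed

lemma norm3sq_plus_g_wedge:
  assumes tr12: "\<And>k. (\<Sum>i\<in>UNIV. \<Sum>j\<in>UNIV. gi i j * A i j k) = - V k"
    and tr13: "\<And>j. (\<Sum>i\<in>UNIV. \<Sum>k\<in>UNIV. gi i k * A i j k) = V j"
  shows "norm3sq (\<lambda>i j k. P * A i j k + Q * g_wedge V i j k)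
       = P\<^sup>2 * norm3sq A + (2 * Q\<^sup>2 * (real CARD('n) - 1) - 4 * P * Q) * norm1sq V"
proof -
  have AW: "inner3 A (g_wedge V) = - 2 * norm1sq V" by (rule inner3_g_wedge[OF tr12 tr13])
  then have WA: "inner3 (g_wedge V) A = - 2 * norm1sq V" by (simp add: inner3_commute)
  have WW: "inner3 (g_wedge V) (g_wedge V) = (2 * real CARD('n) - 2) * norm1sq V"
    using norm3sq_g_wedge by (simp only: norm3sq_eq_inner3)
  show ?thesis
    unfolding norm3sq_eq_inner3 inner3_linear_left inner3_linear_right AW WA WW
    by (simp add: algebra_simps power2_eq_square)
qed

end

context inverse_pair
begin

definition raise_last :: "('n \<Rightarrow> 'n \<Rightarrow> 'n \<Rightarrow> real) \<Rightarrow> 'n \<Rightarrow> 'n \<Rightarrow> 'n \<Rightarrow> real" where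
  "raise_last T a b e = (\<Sum>l\<in>UNIV. T a b l * gi l e)"

definition divergence :: "('n \<Rightarrow> 'n \<Rightarrow> 'n \<Rightarrow> real) \<Rightarrow> 'n \<Rightarrow> real" where
  "divergence T b = (\<Sum>a\<in>UNIV. raise_last T a b a)"

text \<open>If a curvature tensor is a combination \<open>P (Ric \<and> g) - Q R (g \<and> g)\<close> with constant \<open>P, Q\<close>,
  then \<open>\<nabla>\<^sub>a R\<^sub>b\<^sub>c\<^sub>d\<^sup>e\<close> is \<open>ricci_part_deriv P Q cv ds a b c d e\<close> with \<open>cv = \<nabla>Ric\<close> and \<open>ds = \<nabla>R\<close>.\<close>

definition ricci_part_deriv ::
    "real \<Rightarrow> real \<Rightarrow> ('n \<Rightarrow> 'n \<Rightarrow> 'n \<Rightarrow> real) \<Rightarrow> ('n \<Rightarrow> real) \<Rightarrow> 'n \<Rightarrow> 'n \<Rightarrow> 'n \<Rightarrow> 'n \<Rightarrow> 'n \<Rightarrow> real" where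
  "ricci_part_deriv P Q cv ds a b c d e =
     P * (cv a c d * (if b = e then 1 else 0) - cv a b d * (if c = e then 1 else 0)
          + (gg c d * raise_last cv a b e - gg b d * raise_last cv a c e))
     - Q * (ds a * gg c d * (if b = e then 1 else 0) - ds a * gg b d * (if c = e then 1 else 0))"

lemma sum_gg_raise_last: "(\<Sum>a\<in>UNIV. gg a d * raise_last T b c a) = T b c d"
proof -
  have "(\<Sum>a\<in>UNIV. gg a d * raise_last T b c a) = (\<Sum>a\<in>UNIV. gg d a * (\<Sum>l\<in>UNIV. gi a l * T b c l))"
    unfolding raise_last_def by (rule sum.cong) (auto simp: gg_sym gi_sym mult.commute intro!: sum.cong)
  also have "\<dots> = (\<Sum>l\<in>UNIV. (\<Sum>a\<in>UNIV. gg d a * gi a l) * T b c l)" by (rule sum_mult_sum_swap)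
  also have "\<dots> = T b c d" by (simp only: gg_gi sum_delta_mult)
  finally show ?thesis .
qed

lemma sum_raise_last_diag: "(\<Sum>a\<in>UNIV. raise_last T b a a) = (\<Sum>c\<in>UNIV. \<Sum>d\<in>UNIV. gi c d * T b c d)"
  unfolding raise_last_def by (rule sum.cong) (auto simp: gi_sym mult.commute intro!: sum.cong)

lemma divergence_eq: "divergence T b = (\<Sum>c\<in>UNIV. \<Sum>d\<in>UNIV. gi c d * T c b d)"
  unfolding divergence_def raise_last_def by (rule sum.cong) (auto simp: gi_sym mult.commute intro!: sum.cong)

lemma trace_ricci_part_deriv1:
  "(\<Sum>a\<in>UNIV. ricci_part_deriv P Q cv ds a b c d a)
     = P * (cv b c d - cv c b d + gg c d * divergence cv b - gg b d * divergence cv c)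
       - Q * (ds b * gg c d - ds c * gg b d)"
proof -
  have "(\<Sum>a\<in>UNIV. ricci_part_deriv P Q cv ds a b c d a)
      = (\<Sum>a\<in>UNIV. (if b = a then P * cv a c d - Q * (ds a * gg c d) else 0)
          - (if c = a then P * cv a b d - Q * (ds a * gg b d) else 0)
          + (P * gg c d * raise_last cv a b a - P * gg b d * raise_last cv a c a))"
    by (rule sum.cong) (auto simp: ricci_part_deriv_def algebra_simps)
  also have "\<dots> = P * (cv b c d - cv c b d + gg c d * divergence cv b - gg b d * divergence cv c)
       - Q * (ds b * gg c d - ds c * gg b d)"
    unfolding sum.distrib sum_subtractf sum.delta' divergence_def
    by (simp add: sum_distrib_left[symmetric] algebra_simps)
  finally show ?thesis .
qed

context
  fixes cv :: "'n \<Rightarrow> 'n \<Rightarrow> 'n \<Rightarrow> real" and ds :: "'n \<Rightarrow> real"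
  assumes trace_cv: "\<And>a. (\<Sum>c\<in>UNIV. \<Sum>d\<in>UNIV. gi c d * cv a c d) = ds a"
begin

lemma trace_ricci_part_deriv2:
  "(\<Sum>a\<in>UNIV. ricci_part_deriv P Q cv ds b c a d a)
     = P * ((2 - real CARD('n)) * cv b c d - gg c d * ds b) - Q * (1 - real CARD('n)) * ds b * gg c d"
proof -
  have "(\<Sum>a\<in>UNIV. ricci_part_deriv P Q cv ds b c a d a)
      = (\<Sum>a\<in>UNIV. (if c = a then P * cv b a d - Q * (ds b * gg a d) else 0)
          + (P * gg a d * raise_last cv b c a - P * gg c d * raise_last cv b a a)
          - (P * cv b c d - Q * ds b * gg c d))"
    by (rule sum.cong) (auto simp: ricci_part_deriv_def algebra_simps)
  also have "\<dots> = (P * cv b c d - Q * (ds b * gg c d))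
        + (P * (\<Sum>a\<in>UNIV. gg a d * raise_last cv b c a) - P * gg c d * (\<Sum>a\<in>UNIV. raise_last cv b a a))
        - real CARD('n) * (P * cv b c d - Q * ds b * gg c d)"
    unfolding sum.distrib sum_subtractf sum.delta'
    by (simp add: sum_distrib_left[symmetric] mult.assoc right_diff_distrib)
  also have "\<dots> = P * ((2 - real CARD('n)) * cv b c d - gg c d * ds b) - Q * (1 - real CARD('n)) * ds b * gg c d"
    unfolding sum_gg_raise_last sum_raise_last_diag trace_cv by (simp add: algebra_simps)
  finally show ?thesis .
qed

lemma trace_ricci_part_deriv3:
  "(\<Sum>a\<in>UNIV. ricci_part_deriv P Q cv ds c a b d a)
     = P * ((real CARD('n) - 2) * cv c b d + gg b d * ds c) - Q * (real CARD('n) - 1) * ds c * gg b d"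
proof -
  have "(\<Sum>a\<in>UNIV. ricci_part_deriv P Q cv ds c a b d a)
      = (\<Sum>a\<in>UNIV. (P * cv c b d - Q * ds c * gg b d)
          - (if b = a then P * cv c a d - Q * (ds c * gg a d) else 0)
          + (P * gg b d * raise_last cv c a a - P * gg a d * raise_last cv c b a))"
    by (rule sum.cong) (auto simp: ricci_part_deriv_def algebra_simps)
  also have "\<dots> = real CARD('n) * (P * cv c b d - Q * ds c * gg b d) - (P * cv c b d - Q * ds c * gg b d)
        + (P * gg b d * (\<Sum>a\<in>UNIV. raise_last cv c a a) - P * (\<Sum>a\<in>UNIV. gg a d * raise_last cv c b a))"
    unfolding sum.distrib sum_subtractf sum.delta'
    by (simp add: sum_distrib_left[symmetric] mult.assoc right_diff_distrib)
  also have "\<dots> = P * ((real CARD('n) - 2) * cv c b d + gg b d * ds c) - Q * (real CARD('n) - 1) * ds c * gg b d"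
    unfolding sum_gg_raise_last sum_raise_last_diag trace_cv by (simp add: algebra_simps)
  finally show ?thesis .
qed

text \<open>Tracing the cyclic identity over \<open>e = a\<close> and then over \<open>c, d\<close> leaves \<open>2 div Ric = dR\<close>.\<close>

lemma contracted_bianchi_algebra:
  assumes cyclic: "\<And>a b c d e. ricci_part_deriv P Q cv ds a b c d e + ricci_part_deriv P Q cv ds b c a d e
                                + ricci_part_deriv P Q cv ds c a b d e = 0"
    and P: "P * (real CARD('n) - 2) = 1" and Q: "Q * (real CARD('n) - 1) = P"
  shows "2 * divergence cv b = ds b"
proof -
  let ?n = "real CARD('n)"
  define X where "X c d = P * (cv b c d - cv c b d + gg c d * divergence cv b - gg b d * divergence cv c)
     - Q * (ds b * gg c d - ds c * gg b d)
     + (P * ((2 - ?n) * cv b c d - gg c d * ds b) - Q * (1 - ?n) * ds b * gg c d)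
     + (P * ((?n - 2) * cv c b d + gg b d * ds c) - Q * (?n - 1) * ds c * gg b d)" for c d
  have X0: "X c d = 0" for c d
  proof -
    have "X c d = (\<Sum>a\<in>UNIV. ricci_part_deriv P Q cv ds a b c d a + ricci_part_deriv P Q cv ds b c a d a
                           + ricci_part_deriv P Q cv ds c a b d a)"
      unfolding X_def sum.distrib trace_ricci_part_deriv1 trace_ricci_part_deriv2 trace_ricci_part_deriv3 ..
    then show ?thesis using cyclic by simp
  qed
  have contract_gg: "(\<Sum>c\<in>UNIV. \<Sum>d\<in>UNIV. gi c d * (gg b d * f c)) = f b" for f
  proof -
    have "(\<Sum>c\<in>UNIV. \<Sum>d\<in>UNIV. gi c d * (gg b d * f c)) = (\<Sum>c\<in>UNIV. (\<Sum>d\<in>UNIV. gi c d * gg d b) * f c)"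
      by (rule sum.cong) (auto simp: sum_distrib_right sum_distrib_left gg_sym mult_ac)
    then show ?thesis by (simp add: gi_gg)
  qed
  have trace: "(\<Sum>c\<in>UNIV. \<Sum>d\<in>UNIV. gi c d * gg c d) = ?n"
    using trace_gg by (simp add: gi_sym mult.commute)
  have "0 = (\<Sum>c\<in>UNIV. \<Sum>d\<in>UNIV. gi c d * X c d)" using X0 by simp
  also have "\<dots> = (\<Sum>c\<in>UNIV. \<Sum>d\<in>UNIV.
        (P * (1 + (2 - ?n))) * (gi c d * cv b c d) + (P * (?n - 2 - 1)) * (gi c d * cv c b d)
      + (P * divergence cv b - Q * ds b - P * ds b - Q * (1 - ?n) * ds b) * (gi c d * gg c d)
      + (- P) * (gi c d * (gg b d * divergence cv c)) + (Q + P - Q * (?n - 1)) * (gi c d * (gg b d * ds c)))"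
    unfolding X_def by (rule sum.cong[OF refl], rule sum.cong[OF refl]) (simp add: algebra_simps)
  also have "\<dots> = (P * (1 + (2 - ?n))) * ds b + (P * (?n - 2 - 1)) * divergence cv b
      + (P * divergence cv b - Q * ds b - P * ds b - Q * (1 - ?n) * ds b) * ?n
      + (- P) * divergence cv b + (Q + P - Q * (?n - 1)) * ds b"
    unfolding sum.distrib sum_distrib_left[symmetric] trace_cv divergence_eq[symmetric] trace contract_gg ..
  also have "\<dots> = 2 * (P * (?n - 2)) * divergence cv b - 2 * (P * (?n - 2)) * ds b + (Q * (?n - 1)) * (?n - 2) * ds b"
    by (simp add: algebra_simps)
  also have "\<dots> = 2 * divergence cv b - ds b" unfolding Q P by simp
  finally show ?thesis by simp
qed

end

end

section \<open>Metrics, Christoffel symbols and curvature in a chart\<close>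

locale metric_chart = chart U for U :: "(real^'n::finite) set" +
  fixes g :: "'n \<Rightarrow> 'n \<Rightarrow> real^'n \<Rightarrow> real"
  assumes metric: "is_metric U g"
begin

lemma g_smooth[intro]: "smooth_on U (g i j)" using metric unfolding is_metric_def by auto
lemma g_sym: "x \<in> U \<Longrightarrow> g i j x = g j i x" using metric unfolding is_metric_def by auto
lemma g_differentiable: "x \<in> U \<Longrightarrow> g i j differentiable at x" using smooth_on_differentiable g_smooth by blast

lemma invertible_gmat: assumes x: "x \<in> U" shows "invertible (gmat g x)"
proof -
  have pos: "\<And>v. v \<noteq> 0 \<Longrightarrow> v \<bullet> (gmat g x *v v) > 0" using metric x unfolding is_metric_def by auto
  have lin: "linear ((*v) (gmat g x))" by (simp add: matrix_vector_mul_linear)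
  have "inj ((*v) (gmat g x))"
    unfolding linear_injective_0[OF lin]
  proof (intro allI impI)
    fix v assume "gmat g x *v v = 0"
    then show "v = 0" using pos[of v] by (metis inner_zero_right less_irrefl)
  qed
  then have "det (matrix ((*v) (gmat g x))) \<noteq> 0" using det_nz_iff_inj[OF lin] by blast
  then show ?thesis by (simp add: invertible_det_nz)
qed

lemma det_gmat_nonzero: "x \<in> U \<Longrightarrow> det (gmat g x) \<noteq> 0"
  using invertible_gmat invertible_det_nz by blast

lemma gmat_matrix_inv: "x \<in> U \<Longrightarrow> gmat g x ** matrix_inv (gmat g x) = mat 1 \<and> matrix_inv (gmat g x) ** gmat g x = mat 1"
  unfolding matrix_inv_def using invertible_gmat[unfolded invertible_def] by (rule someI_ex)

lemma ginv_g: "x \<in> U \<Longrightarrow> (\<Sum>l\<in>UNIV. ginv g i l x * g l j x) = (if i = j then 1 else 0)"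
  using gmat_matrix_inv[of x] unfolding ginv_def
  by (simp add: vec_eq_iff matrix_matrix_mult_def mat_def gmat_def)

lemma g_ginv: "x \<in> U \<Longrightarrow> (\<Sum>l\<in>UNIV. g i l x * ginv g l j x) = (if i = j then 1 else 0)"
  using gmat_matrix_inv[of x] unfolding ginv_def
  by (simp add: vec_eq_iff matrix_matrix_mult_def mat_def gmat_def)

lemma ginv_sym: assumes x: "x \<in> U" shows "ginv g i j x = ginv g j i x"
proof -
  have A: "(\<Sum>m\<in>UNIV. g l m x * ginv g j m x) = (if j = l then 1 else 0)" for l
    using ginv_g[OF x, of j l] g_sym[OF x] by (simp add: mult.commute)
  have "ginv g i j x = (\<Sum>l\<in>UNIV. ginv g i l x * (if j = l then 1 else 0))"
    by (simp add: if_distrib cong: if_cong)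
  also have "\<dots> = (\<Sum>l\<in>UNIV. ginv g i l x * (\<Sum>m\<in>UNIV. g l m x * ginv g j m x))"
    using A by simp
  also have "\<dots> = (\<Sum>m\<in>UNIV. (\<Sum>l\<in>UNIV. ginv g i l x * g l m x) * ginv g j m x)"
    unfolding sum_distrib_left sum_distrib_right mult.assoc by (rule sum.swap)
  also have "\<dots> = (\<Sum>m\<in>UNIV. (if i = m then 1 else 0) * ginv g j m x)" by (simp add: ginv_g[OF x])
  also have "\<dots> = ginv g j i x" by (rule sum_delta_mult)
  finally show ?thesis .
qed

lemma ginv_cramer: assumes x: "x \<in> U"
  shows "ginv g i j x = det (\<chi> a c. if c = i then (if a = j then 1 else 0) else g a c x) / det (gmat g x)"
proof -
  define b where "b = (\<chi> a. if a = j then 1 else (0::real))"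
  let ?A = "gmat g x"
  have "?A *v (matrix_inv ?A *v b) = b"
    using gmat_matrix_inv[OF x] by (simp add: matrix_vector_mul_assoc)
  then have "matrix_inv ?A *v b = (\<chi> k. det(\<chi> a c. if c = k then b$a else ?A$a$c) / det ?A)"
    using cramer[OF det_gmat_nonzero[OF x]] by blast
  then have cramer_entry: "(matrix_inv ?A *v b) $ i = det(\<chi> a c. if c = i then b$a else ?A$a$c) / det ?A"
    by simp
  have entry: "ginv g i j x = (matrix_inv ?A *v b) $ i"
    unfolding ginv_def matrix_vector_mult_def b_def by (simp add: if_distrib cong: if_cong)
  have column: "(\<chi> a c. if c = i then b$a else ?A$a$c) = (\<chi> a c. if c = i then (if a = j then 1 else 0) else g a c x)"
    by (rule arg_cong[where f=vec_lambda], rule ext, rule arg_cong[where f=vec_lambda], rule ext) (simp add: gmat_def b_def)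
  show ?thesis using entry cramer_entry column by simp
qed

lemma ginv_smooth[intro]: "smooth_on U (ginv g i j)"
proof -
  have d1: "smooth_on U (\<lambda>y. det (gmat g y))" by (rule smooth_on_det) (simp add: gmat_def g_smooth)
  have d2: "smooth_on U (\<lambda>y. det (\<chi> a c. if c = i then (if a = j then 1 else 0) else g a c y))"
    by (rule smooth_on_det) (unfold vec_lambda_beta, intro smooth_on_If smooth_on_const g_smooth)
  have "smooth_on U (\<lambda>y. det (\<chi> a c. if c = i then (if a = j then 1 else 0) else g a c y) * (1 / det (gmat g y)))"
    by (rule smooth_on_mult[OF d2 smooth_on_inverse[OF d1 det_gmat_nonzero]])
  then show ?thesis by (rule smooth_on_cong) (simp add: ginv_cramer)
qed

lemma ginv_differentiable: "x \<in> U \<Longrightarrow> ginv g i j differentiable at x" using smooth_on_differentiable ginv_smooth by blast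

lemma pd_g_sym: "x \<in> U \<Longrightarrow> pd k (g j i) x = pd k (g i j) x"
  by (rule pd_cong_open[OF openU]) (auto simp: g_sym)

lemma chr_sym: assumes x: "x \<in> U" shows "chr g k i j x = chr g k j i x"
  unfolding chr_def using pd_g_sym[OF x] by (simp add: add.commute)

lemma chr_smooth[intro]: "smooth_on U (chr g k i j)"
  unfolding chr_def
  by (rule smooth_on_mult[OF smooth_on_const], rule smooth_on_sum, rule smooth_on_mult[OF ginv_smooth],
      rule smooth_on_diff[OF smooth_on_add], (rule smooth_on_pd[OF g_smooth])+)

lemma chr_differentiable: "x \<in> U \<Longrightarrow> chr g k i j differentiable at x" using smooth_on_differentiable chr_smooth by blast

lemma christoffel_lowered: assumes x: "x \<in> U"
  shows "(\<Sum>k\<in>UNIV. g l k x * chr g k i j x) = 1/2 * (pd i (g j l) x + pd j (g i l) x - pd l (g i j) x)"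
proof -
  have "(\<Sum>k\<in>UNIV. g l k x * chr g k i j x)
     = 1/2 * (\<Sum>k\<in>UNIV. g l k x * (\<Sum>m\<in>UNIV. ginv g k m x * (pd i (g j m) x + pd j (g i m) x - pd m (g i j) x)))"
    unfolding chr_def by (simp add: sum_distrib_left mult.left_commute)
  also have "\<dots> = 1/2 * (\<Sum>m\<in>UNIV. (\<Sum>k\<in>UNIV. g l k x * ginv g k m x) * (pd i (g j m) x + pd j (g i m) x - pd m (g i j) x))"
    by (simp only: sum_mult_sum_swap)
  also have "\<dots> = 1/2 * (pd i (g j l) x + pd j (g i l) x - pd l (g i j) x)"
    by (simp only: g_ginv[OF x] sum_delta_mult)
  finally show ?thesis .
qed

lemma metric_compatible: assumes x: "x \<in> U"
  shows "pd k (g i j) x = (\<Sum>m\<in>UNIV. chr g m k i x * g m j x + chr g m k j x * g i m x)"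
proof -
  have "(\<Sum>m\<in>UNIV. chr g m k i x * g m j x + chr g m k j x * g i m x)
      = (\<Sum>m\<in>UNIV. g j m x * chr g m k i x) + (\<Sum>m\<in>UNIV. g i m x * chr g m k j x)"
    by (simp add: sum.distrib g_sym[OF x, of _ j] mult.commute)
  also have "\<dots> = pd k (g i j) x"
    unfolding christoffel_lowered[OF x] using pd_g_sym[OF x, of k i j] pd_g_sym[OF x, of j i k] pd_g_sym[OF x, of i j k]
    by (simp add: algebra_simps)
  finally show ?thesis by simp
qed

lemma inverse_pair_at: "x \<in> U \<Longrightarrow> inverse_pair (\<lambda>i j. ginv g i j x) (\<lambda>i j. g i j x)"
  by unfold_locales (use ginv_sym g_sym ginv_g in auto)

lemma pd_ginv_via_pd_g:
  assumes x: "x \<in> U"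
  shows "pd k (ginv g a b) x = - (\<Sum>c\<in>UNIV. (\<Sum>l\<in>UNIV. ginv g a l x * pd k (g l c) x) * ginv g c b x)"
proof -
  have product_rule: "(\<Sum>l\<in>UNIV. pd k (ginv g a l) x * g l c x) = - (\<Sum>l\<in>UNIV. ginv g a l x * pd k (g l c) x)" for c
  proof -
    have "(\<Sum>l\<in>UNIV. pd k (ginv g a l) x * g l c x + ginv g a l x * pd k (g l c) x)
          = pd k (\<lambda>y. \<Sum>l\<in>UNIV. ginv g a l y * g l c y) x"
      using x by (simp add: pd_sum pd_mult ginv_differentiable g_differentiable)
    also have "\<dots> = pd k (\<lambda>y. if a = c then 1 else 0) x"
      by (rule pd_cong_open[OF openU x]) (simp add: ginv_g)
    finally show ?thesis unfolding sum.distrib by simp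
  qed
  have "pd k (ginv g a b) x = (\<Sum>l\<in>UNIV. pd k (ginv g a l) x * (\<Sum>c\<in>UNIV. g l c x * ginv g c b x))"
    by (simp add: g_ginv[OF x])
  also have "\<dots> = (\<Sum>c\<in>UNIV. (\<Sum>l\<in>UNIV. pd k (ginv g a l) x * g l c x) * ginv g c b x)"
    by (rule sum_mult_sum_swap)
  finally show ?thesis unfolding product_rule by (simp add: sum_negf)
qed

lemma pd_ginv:
  assumes x: "x \<in> U"
  shows "pd k (ginv g a b) x = - (\<Sum>m\<in>UNIV. chr g a k m x * ginv g m b x + chr g b k m x * ginv g a m x)"
proof -
  have first: "(\<Sum>c\<in>UNIV. (\<Sum>l\<in>UNIV. ginv g a l x * (\<Sum>m\<in>UNIV. chr g m k l x * g m c x)) * ginv g c b x)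
      = (\<Sum>m\<in>UNIV. chr g b k m x * ginv g a m x)"
  proof -
    have "(\<Sum>c\<in>UNIV. (\<Sum>l\<in>UNIV. ginv g a l x * (\<Sum>m\<in>UNIV. chr g m k l x * g m c x)) * ginv g c b x)
       = (\<Sum>l\<in>UNIV. ginv g a l x * (\<Sum>m\<in>UNIV. chr g m k l x * (\<Sum>c\<in>UNIV. g m c x * ginv g c b x)))"
    proof -
      have "(\<Sum>c\<in>UNIV. (\<Sum>l\<in>UNIV. ginv g a l x * (\<Sum>m\<in>UNIV. chr g m k l x * g m c x)) * ginv g c b x)
         = (\<Sum>c\<in>UNIV. \<Sum>l\<in>UNIV. ginv g a l x * (\<Sum>m\<in>UNIV. chr g m k l x * g m c x) * ginv g c b x)"
        by (simp add: sum_distrib_right)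
      also have "\<dots> = (\<Sum>l\<in>UNIV. \<Sum>c\<in>UNIV. ginv g a l x * (\<Sum>m\<in>UNIV. chr g m k l x * g m c x) * ginv g c b x)"
        by (rule sum.swap)
      also have "\<dots> = (\<Sum>l\<in>UNIV. ginv g a l x * (\<Sum>c\<in>UNIV. (\<Sum>m\<in>UNIV. chr g m k l x * g m c x) * ginv g c b x))"
        by (simp only: mult.assoc sum_distrib_left[symmetric])
      finally show ?thesis by (simp only: sum_mult_sum_swap)
    qed
    then show ?thesis by (simp add: g_ginv[OF x] mult.commute)
  qed
  have second: "(\<Sum>l\<in>UNIV. ginv g a l x * (\<Sum>m\<in>UNIV. chr g m k c x * g l m x)) = chr g a k c x" for c
  proof -
    have "(\<Sum>l\<in>UNIV. ginv g a l x * (\<Sum>m\<in>UNIV. chr g m k c x * g l m x))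
        = (\<Sum>m\<in>UNIV. (\<Sum>l\<in>UNIV. ginv g a l x * g l m x) * chr g m k c x)"
      by (subst sum_mult_sum_swap[symmetric]) (simp add: mult.commute)
    then show ?thesis by (simp only: ginv_g[OF x] sum_delta_mult)
  qed
  have "pd k (ginv g a b) x
      = - (\<Sum>c\<in>UNIV. (\<Sum>l\<in>UNIV. ginv g a l x * (\<Sum>m\<in>UNIV. chr g m k l x * g m c x)) * ginv g c b x)
        - (\<Sum>c\<in>UNIV. (\<Sum>l\<in>UNIV. ginv g a l x * (\<Sum>m\<in>UNIV. chr g m k c x * g l m x)) * ginv g c b x)"
    unfolding pd_ginv_via_pd_g[OF x] metric_compatible[OF x]
    by (simp add: sum.distrib distrib_left distrib_right)
  then show ?thesis unfolding first second by (simp add: sum.distrib add.commute)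
qed

end

section \<open>Covariant derivatives, Ricci identities and the Bianchi identities\<close>

text \<open>Coordinate form of the Ricci identity: \<open>G\<close> and \<open>dG'\<close> stand for the Christoffel symbols and
  their first derivatives, \<open>w\<close>, \<open>dw\<close>, \<open>ddw\<close> for a 1-form and its first and second derivatives.\<close>

lemma ricci_identity1_coords:
  fixes G ddw :: "'n::finite \<Rightarrow> 'n \<Rightarrow> 'n \<Rightarrow> real" and dG' :: "'n \<Rightarrow> 'n \<Rightarrow> 'n \<Rightarrow> 'n \<Rightarrow> real"
    and dw :: "'n \<Rightarrow> 'n \<Rightarrow> real" and w :: "'n \<Rightarrow> real"
  assumes Gs: "\<And>m i j. G m i j = G m j i" and dds: "ddw a b c = ddw b a c"
  shows "(ddw a b c - (\<Sum>m\<in>UNIV. dG' a m b c * w m + G m b c * dw a m)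
      - (\<Sum>m\<in>UNIV. G m a b * (dw m c - (\<Sum>p\<in>UNIV. G p m c * w p)) + G m a c * (dw b m - (\<Sum>p\<in>UNIV. G p b m * w p))))
    - (ddw b a c - (\<Sum>m\<in>UNIV. dG' b m a c * w m + G m a c * dw b m)
      - (\<Sum>m\<in>UNIV. G m b a * (dw m c - (\<Sum>p\<in>UNIV. G p m c * w p)) + G m b c * (dw a m - (\<Sum>p\<in>UNIV. G p a m * w p))))
     = - (\<Sum>e\<in>UNIV. (dG' a e b c - dG' b e a c
             + (\<Sum>m\<in>UNIV. G e a m * G m b c - G e b m * G m a c)) * w e)"
    (is "?lhs = ?rhs")
proof -
  have s1: "(\<Sum>e\<in>UNIV. (\<Sum>m\<in>UNIV. G e a m * G m b c) * w e) = (\<Sum>m\<in>UNIV. G m b c * (\<Sum>p\<in>UNIV. G p a m * w p))"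
    by (rule sum_sum_mult_swap)
  have s2: "(\<Sum>e\<in>UNIV. (\<Sum>m\<in>UNIV. G e b m * G m a c) * w e) = (\<Sum>m\<in>UNIV. G m a c * (\<Sum>p\<in>UNIV. G p b m * w p))"
    by (rule sum_sum_mult_swap)
  have "?rhs
      = - (\<Sum>e\<in>UNIV. dG' a e b c * w e) + (\<Sum>e\<in>UNIV. dG' b e a c * w e)
        - (\<Sum>e\<in>UNIV. (\<Sum>m\<in>UNIV. G e a m * G m b c) * w e) + (\<Sum>e\<in>UNIV. (\<Sum>m\<in>UNIV. G e b m * G m a c) * w e)"
    by (simp add: algebra_simps sum.distrib sum_subtractf)
  also have "\<dots> = - (\<Sum>e\<in>UNIV. dG' a e b c * w e) + (\<Sum>e\<in>UNIV. dG' b e a c * w e)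
        - (\<Sum>m\<in>UNIV. G m b c * (\<Sum>p\<in>UNIV. G p a m * w p)) + (\<Sum>m\<in>UNIV. G m a c * (\<Sum>p\<in>UNIV. G p b m * w p))"
    by (simp only: s1 s2)
  also have "\<dots> = ?lhs"
    using dds Gs[of _ a b]
    by (simp add: algebra_simps sum.distrib sum_subtractf)
  finally show ?thesis by simp
qed

lemma ricci_identity2_coords:
  fixes G dS :: "'n::finite \<Rightarrow> 'n \<Rightarrow> 'n \<Rightarrow> real" and dG' dd :: "'n \<Rightarrow> 'n \<Rightarrow> 'n \<Rightarrow> 'n \<Rightarrow> real"
    and S :: "'n \<Rightarrow> 'n \<Rightarrow> real"
  assumes Gs: "\<And>m i j. G m i j = G m j i" and dds: "dd a b c d = dd b a c d"
  shows "(dd a b c d - (\<Sum>m\<in>UNIV. dG' a m b c * S m d + G m b c * dS a m d + (dG' a m b d * S c m + G m b d * dS a c m))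
      - (\<Sum>m\<in>UNIV. G m a b * (dS m c d - (\<Sum>p\<in>UNIV. G p m c * S p d + G p m d * S c p))
          + G m a c * (dS b m d - (\<Sum>p\<in>UNIV. G p b m * S p d + G p b d * S m p))
          + G m a d * (dS b c m - (\<Sum>p\<in>UNIV. G p b c * S p m + G p b m * S c p))))
    - (dd b a c d - (\<Sum>m\<in>UNIV. dG' b m a c * S m d + G m a c * dS b m d + (dG' b m a d * S c m + G m a d * dS b c m))
      - (\<Sum>m\<in>UNIV. G m b a * (dS m c d - (\<Sum>p\<in>UNIV. G p m c * S p d + G p m d * S c p))
          + G m b c * (dS a m d - (\<Sum>p\<in>UNIV. G p a m * S p d + G p a d * S m p))
          + G m b d * (dS a c m - (\<Sum>p\<in>UNIV. G p a c * S p m + G p a m * S c p))))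
     = - (\<Sum>e\<in>UNIV. (dG' a e b c - dG' b e a c + (\<Sum>m\<in>UNIV. G e a m * G m b c - G e b m * G m a c)) * S e d
      + (dG' a e b d - dG' b e a d + (\<Sum>m\<in>UNIV. G e a m * G m b d - G e b m * G m a d)) * S c e)"
    (is "?lhs = ?rhs")
proof -
  have s1: "(\<Sum>e\<in>UNIV. (\<Sum>m\<in>UNIV. G e a m * G m b c) * S e d) = (\<Sum>m\<in>UNIV. G m b c * (\<Sum>p\<in>UNIV. G p a m * S p d))"
    by (rule sum_sum_mult_swap)
  have s2: "(\<Sum>e\<in>UNIV. (\<Sum>m\<in>UNIV. G e b m * G m a c) * S e d) = (\<Sum>m\<in>UNIV. G m a c * (\<Sum>p\<in>UNIV. G p b m * S p d))"
    by (rule sum_sum_mult_swap)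
  have s3: "(\<Sum>e\<in>UNIV. (\<Sum>m\<in>UNIV. G e a m * G m b d) * S c e) = (\<Sum>m\<in>UNIV. G m b d * (\<Sum>p\<in>UNIV. G p a m * S c p))"
    by (rule sum_sum_mult_swap)
  have s4: "(\<Sum>e\<in>UNIV. (\<Sum>m\<in>UNIV. G e b m * G m a d) * S c e) = (\<Sum>m\<in>UNIV. G m a d * (\<Sum>p\<in>UNIV. G p b m * S c p))"
    by (rule sum_sum_mult_swap)
  have c1: "(\<Sum>m\<in>UNIV. G m a d * (\<Sum>p\<in>UNIV. G p b c * S p m)) = (\<Sum>m\<in>UNIV. G m b c * (\<Sum>p\<in>UNIV. G p a d * S m p))"
    by (rule sum_mult_sum_swap')
  have c2: "(\<Sum>m\<in>UNIV. G m b d * (\<Sum>p\<in>UNIV. G p a c * S p m)) = (\<Sum>m\<in>UNIV. G m a c * (\<Sum>p\<in>UNIV. G p b d * S m p))"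
    by (rule sum_mult_sum_swap')
  have "?rhs
      = - (\<Sum>e\<in>UNIV. dG' a e b c * S e d) + (\<Sum>e\<in>UNIV. dG' b e a c * S e d)
        - (\<Sum>e\<in>UNIV. (\<Sum>m\<in>UNIV. G e a m * G m b c) * S e d) + (\<Sum>e\<in>UNIV. (\<Sum>m\<in>UNIV. G e b m * G m a c) * S e d)
        - (\<Sum>e\<in>UNIV. dG' a e b d * S c e) + (\<Sum>e\<in>UNIV. dG' b e a d * S c e)
        - (\<Sum>e\<in>UNIV. (\<Sum>m\<in>UNIV. G e a m * G m b d) * S c e) + (\<Sum>e\<in>UNIV. (\<Sum>m\<in>UNIV. G e b m * G m a d) * S c e)"
    by (simp add: algebra_simps sum.distrib sum_subtractf)
  also have "\<dots> = - (\<Sum>e\<in>UNIV. dG' a e b c * S e d) + (\<Sum>e\<in>UNIV. dG' b e a c * S e d)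
        - (\<Sum>m\<in>UNIV. G m b c * (\<Sum>p\<in>UNIV. G p a m * S p d)) + (\<Sum>m\<in>UNIV. G m a c * (\<Sum>p\<in>UNIV. G p b m * S p d))
        - (\<Sum>e\<in>UNIV. dG' a e b d * S c e) + (\<Sum>e\<in>UNIV. dG' b e a d * S c e)
        - (\<Sum>m\<in>UNIV. G m b d * (\<Sum>p\<in>UNIV. G p a m * S c p)) + (\<Sum>m\<in>UNIV. G m a d * (\<Sum>p\<in>UNIV. G p b m * S c p))"
    by (simp only: s1 s2 s3 s4)
  also have "\<dots> = ?lhs"
    using dds Gs[of _ a b] c1 c2
    by (simp add: algebra_simps sum.distrib sum_subtractf)
  finally show ?thesis by simp
qed

lemma cov_d3_contraction_coords:
  fixes G :: "'n::finite \<Rightarrow> 'n \<Rightarrow> 'n \<Rightarrow> real" and R :: "'n \<Rightarrow> 'n \<Rightarrow> 'n \<Rightarrow> 'n \<Rightarrow> real"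
    and dR :: "'n \<Rightarrow> real" and dw :: "'n \<Rightarrow> real" and w :: "'n \<Rightarrow> real"
  shows "(\<Sum>e\<in>UNIV. dR e * w e + R b c d e * dw e)
     - (\<Sum>m\<in>UNIV. G m a b * (\<Sum>e\<in>UNIV. R m c d e * w e) + G m a c * (\<Sum>e\<in>UNIV. R b m d e * w e)
            + G m a d * (\<Sum>e\<in>UNIV. R b c m e * w e))
   = (\<Sum>e\<in>UNIV. (dR e - (\<Sum>m\<in>UNIV. G m a b * R m c d e + G m a c * R b m d e + G m a d * R b c m e)
          + (\<Sum>m\<in>UNIV. G e a m * R b c d m)) * w e + R b c d e * (dw e - (\<Sum>m\<in>UNIV. G m a e * w m)))"
    (is "?lhs = ?rhs")
proof -
  have "?rhs
     = (\<Sum>e\<in>UNIV. dR e * w e) - (\<Sum>e\<in>UNIV. (\<Sum>m\<in>UNIV. G m a b * R m c d e) * w e)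
        - (\<Sum>e\<in>UNIV. (\<Sum>m\<in>UNIV. G m a c * R b m d e) * w e) - (\<Sum>e\<in>UNIV. (\<Sum>m\<in>UNIV. G m a d * R b c m e) * w e)
        + (\<Sum>e\<in>UNIV. (\<Sum>m\<in>UNIV. G e a m * R b c d m) * w e)
        + (\<Sum>e\<in>UNIV. R b c d e * dw e) - (\<Sum>e\<in>UNIV. R b c d e * (\<Sum>m\<in>UNIV. G m a e * w m))"
    by (simp add: algebra_simps sum.distrib sum_subtractf)
  also have "\<dots> = (\<Sum>e\<in>UNIV. dR e * w e) - (\<Sum>m\<in>UNIV. G m a b * (\<Sum>e\<in>UNIV. R m c d e * w e))
        - (\<Sum>m\<in>UNIV. G m a c * (\<Sum>e\<in>UNIV. R b m d e * w e)) - (\<Sum>m\<in>UNIV. G m a d * (\<Sum>e\<in>UNIV. R b c m e * w e))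
        + (\<Sum>m\<in>UNIV. R b c d m * (\<Sum>e\<in>UNIV. G e a m * w e))
        + (\<Sum>e\<in>UNIV. R b c d e * dw e) - (\<Sum>e\<in>UNIV. R b c d e * (\<Sum>m\<in>UNIV. G m a e * w m))"
    by (simp only: sum_sum_mult_swap' sum_sum_mult_swap)
  also have "\<dots> = ?lhs"
    by (simp add: sum.distrib)
  finally show ?thesis by simp
qed

context metric_chart
begin

text \<open>\<open>cov_d1\<close>, \<open>cov_d2\<close>, \<open>cov_d3\<close> are \<open>\<nabla>\<^sub>a\<close> of covariant tensors of rank 1, 2, 3, written with the
  derivative index first; \<open>cov_d11\<close> and \<open>cov_d31\<close> act on tensors whose last index is contravariant.\<close>

definition cov_d1 :: "('n \<Rightarrow> real^'n \<Rightarrow> real) \<Rightarrow> 'n \<Rightarrow> 'n \<Rightarrow> real^'n \<Rightarrow> real" where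
  "cov_d1 \<omega> b c x = pd b (\<omega> c) x - (\<Sum>m\<in>UNIV. chr g m b c x * \<omega> m x)"

definition cov_d2 :: "('n \<Rightarrow> 'n \<Rightarrow> real^'n \<Rightarrow> real) \<Rightarrow> 'n \<Rightarrow> 'n \<Rightarrow> 'n \<Rightarrow> real^'n \<Rightarrow> real" where
  "cov_d2 S a b c x = pd a (S b c) x - (\<Sum>m\<in>UNIV. chr g m a b x * S m c x + chr g m a c x * S b m x)"

definition cov_d3 :: "('n \<Rightarrow> 'n \<Rightarrow> 'n \<Rightarrow> real^'n \<Rightarrow> real) \<Rightarrow> 'n \<Rightarrow> 'n \<Rightarrow> 'n \<Rightarrow> 'n \<Rightarrow> real^'n \<Rightarrow> real" where
  "cov_d3 T a b c d x = pd a (T b c d) x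
     - (\<Sum>m\<in>UNIV. chr g m a b x * T m c d x + chr g m a c x * T b m d x + chr g m a d x * T b c m x)"

definition cov_d11 :: "('n \<Rightarrow> 'n \<Rightarrow> real^'n \<Rightarrow> real) \<Rightarrow> 'n \<Rightarrow> 'n \<Rightarrow> 'n \<Rightarrow> real^'n \<Rightarrow> real" where
  "cov_d11 Y a b e x = pd a (Y b e) x
     - (\<Sum>m\<in>UNIV. chr g m a b x * Y m e x) + (\<Sum>m\<in>UNIV. chr g e a m x * Y b m x)"

definition cov_d31 :: "('n \<Rightarrow> 'n \<Rightarrow> 'n \<Rightarrow> 'n \<Rightarrow> real^'n \<Rightarrow> real) \<Rightarrow> 'n \<Rightarrow> 'n \<Rightarrow> 'n \<Rightarrow> 'n \<Rightarrow> 'n \<Rightarrow> real^'n \<Rightarrow> real" where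
  "cov_d31 T a b c d e x = pd a (T b c d e) x
     - (\<Sum>m\<in>UNIV. chr g m a b x * T m c d e x + chr g m a c x * T b m d e x + chr g m a d x * T b c m e x)
     + (\<Sum>m\<in>UNIV. chr g e a m x * T b c d m x)"

lemma cov_d1_def': "cov_d1 \<omega> b c = (\<lambda>x. pd b (\<omega> c) x - (\<Sum>m\<in>UNIV. chr g m b c x * \<omega> m x))"
  by (rule ext) (simp add: cov_d1_def)
lemma cov_d2_def': "cov_d2 S a b c = (\<lambda>x. pd a (S b c) x - (\<Sum>m\<in>UNIV. chr g m a b x * S m c x + chr g m a c x * S b m x))"
  by (rule ext) (simp add: cov_d2_def)

lemma cov_d1_smooth[intro]: "(\<And>c. smooth_on U (\<omega> c)) \<Longrightarrow> smooth_on U (cov_d1 \<omega> b c)"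
  unfolding cov_d1_def' by (rule smooth_on_diff[OF smooth_on_pd smooth_on_sum[OF smooth_on_mult[OF chr_smooth]]]) auto

lemma cov_d2_smooth[intro]: "(\<And>b c. smooth_on U (S b c)) \<Longrightarrow> smooth_on U (cov_d2 S a b c)"
  unfolding cov_d2_def' by (rule smooth_on_diff[OF smooth_on_pd smooth_on_sum[OF smooth_on_add[OF smooth_on_mult[OF chr_smooth] smooth_on_mult[OF chr_smooth]]]]) auto

lemma pd_cov_d1: assumes w: "\<And>c. smooth_on U (\<omega> c)" and x: "x \<in> U"
  shows "pd a (cov_d1 \<omega> b c) x = pd a (pd b (\<omega> c)) x
     - (\<Sum>m\<in>UNIV. pd a (chr g m b c) x * \<omega> m x + chr g m b c x * pd a (\<omega> m) x)"
proof -
  have d: "\<omega> m differentiable at x" "pd b (\<omega> m) differentiable at x" for m b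
    using smooth_on_differentiable[OF w x] smooth_on_differentiable[OF smooth_on_pd[OF w] x] by auto
  show ?thesis unfolding cov_d1_def'
    using x chr_differentiable d
    by (simp add: pd_diff pd_sum pd_mult differentiable_sum)
qed

lemma ricci_identity1: assumes w: "\<And>c. smooth_on U (\<omega> c)" and x: "x \<in> U"
  shows "cov_d2 (cov_d1 \<omega>) a b c x - cov_d2 (cov_d1 \<omega>) b a c x = - (\<Sum>e\<in>UNIV. riem g a b c e x * \<omega> e x)"
proof -
  have ex: "cov_d2 (cov_d1 \<omega>) a b c x = pd a (pd b (\<omega> c)) x - (\<Sum>m\<in>UNIV. pd a (chr g m b c) x * \<omega> m x + chr g m b c x * pd a (\<omega> m) x)
      - (\<Sum>m\<in>UNIV. chr g m a b x * (pd m (\<omega> c) x - (\<Sum>p\<in>UNIV. chr g p m c x * \<omega> p x))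
                 + chr g m a c x * (pd b (\<omega> m) x - (\<Sum>p\<in>UNIV. chr g p b m x * \<omega> p x)))" for a b c
    unfolding cov_d2_def pd_cov_d1[OF w x] cov_d1_def ..
  have sw: "pd a (pd b (\<omega> c)) x = pd b (pd a (\<omega> c)) x"
    by (rule pd_commute[OF openU x]) (use smooth_on_differentiable smooth_on_pd w x in auto)
  show ?thesis
    unfolding ex riem_def
    by (rule ricci_identity1_coords[where G="\<lambda>m i j. chr g m i j x" and ddw="\<lambda>a b c. pd a (pd b (\<omega> c)) x"
            and dG'="\<lambda>a m i j. pd a (chr g m i j) x" and dw="\<lambda>a m. pd a (\<omega> m) x"
            and w="\<lambda>m. \<omega> m x"])
       (use chr_sym[OF x] sw in auto)
qed

lemma pd_cov_d2: assumes S: "\<And>b c. smooth_on U (S b c)" and x: "x \<in> U"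
  shows "pd a (cov_d2 S b c d) x = pd a (pd b (S c d)) x
     - (\<Sum>m\<in>UNIV. pd a (chr g m b c) x * S m d x + chr g m b c x * pd a (S m d) x
          + (pd a (chr g m b d) x * S c m x + chr g m b d x * pd a (S c m) x))"
proof -
  have d: "S m l differentiable at x" "pd b (S m l) differentiable at x" for m b l
    using smooth_on_differentiable[OF S x] smooth_on_differentiable[OF smooth_on_pd[OF S] x] by auto
  show ?thesis unfolding cov_d2_def'
    using x chr_differentiable d
    by (simp add: pd_diff pd_sum pd_mult pd_add differentiable_sum)
qed

lemma ricci_identity2: assumes S: "\<And>b c. smooth_on U (S b c)" and x: "x \<in> U"
  shows "cov_d3 (cov_d2 S) a b c d x - cov_d3 (cov_d2 S) b a c d x
     = - (\<Sum>e\<in>UNIV. riem g a b c e x * S e d x + riem g a b d e x * S c e x)"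
proof -
  have ex: "cov_d3 (cov_d2 S) a b c d x = pd a (pd b (S c d)) x
     - (\<Sum>m\<in>UNIV. pd a (chr g m b c) x * S m d x + chr g m b c x * pd a (S m d) x
          + (pd a (chr g m b d) x * S c m x + chr g m b d x * pd a (S c m) x))
      - (\<Sum>m\<in>UNIV. chr g m a b x * (pd m (S c d) x - (\<Sum>p\<in>UNIV. chr g p m c x * S p d x + chr g p m d x * S c p x))
          + chr g m a c x * (pd b (S m d) x - (\<Sum>p\<in>UNIV. chr g p b m x * S p d x + chr g p b d x * S m p x))
          + chr g m a d x * (pd b (S c m) x - (\<Sum>p\<in>UNIV. chr g p b c x * S p m x + chr g p b m x * S c p x)))" for a b c d
    unfolding cov_d3_def pd_cov_d2[OF S x] cov_d2_def ..
  have sw: "pd a (pd b (S c d)) x = pd b (pd a (S c d)) x"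
    by (rule pd_commute[OF openU x]) (use smooth_on_differentiable smooth_on_pd S x in auto)
  show ?thesis
    unfolding ex riem_def
    by (rule ricci_identity2_coords[where G="\<lambda>m i j. chr g m i j x" and dd="\<lambda>a b c d. pd a (pd b (S c d)) x"
            and dG'="\<lambda>a m i j. pd a (chr g m i j) x" and dS="\<lambda>a m l. pd a (S m l) x"
            and S="\<lambda>m l. S m l x"])
       (use chr_sym[OF x] sw in auto)
qed

lemma riem_def': "riem g i j k l = (\<lambda>x. pd i (chr g l j k) x - pd j (chr g l i k) x
     + (\<Sum>m\<in>UNIV. chr g l i m x * chr g m j k x - chr g l j m x * chr g m i k x))"
  by (rule ext) (simp add: riem_def)

lemma riem_smooth[intro]: "smooth_on U (riem g i j k l)"
  unfolding riem_def'
  by (rule smooth_on_add[OF smooth_on_diff[OF smooth_on_pd smooth_on_pd] smooth_on_sum[OF smooth_on_diff[OF smooth_on_mult smooth_on_mult]]]) auto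

lemma riem_differentiable: "x \<in> U \<Longrightarrow> riem g i j k l differentiable at x" using smooth_on_differentiable riem_smooth by blast

lemma first_bianchi: assumes x: "x \<in> U"
  shows "riem g a b c e x + riem g b c a e x + riem g c a b e x = 0"
proof -
  have p: "pd k (chr g e i j) x = pd k (chr g e j i) x" for k i j
    by (rule pd_cong_open[OF openU x]) (simp add: chr_sym)
  show ?thesis unfolding riem_def
    using p[of a b c] p[of b c a] p[of c a b] chr_sym[OF x]
    by (simp add: algebra_simps sum.distrib sum_subtractf)
qed

lemma cov_d3_riem_contraction: assumes w: "\<And>c. smooth_on U (\<omega> c)" and x: "x \<in> U"
  shows "cov_d3 (\<lambda>b c d y. \<Sum>e\<in>UNIV. riem g b c d e y * \<omega> e y) a b c d x
     = (\<Sum>e\<in>UNIV. cov_d31 (riem g) a b c d e x * \<omega> e x + riem g b c d e x * cov_d1 \<omega> a e x)"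
proof -
  have dw: "\<omega> m differentiable at x" for m using smooth_on_differentiable[OF w x] .
  have "pd a (\<lambda>y. \<Sum>e\<in>UNIV. riem g b c d e y * \<omega> e y) x
      = (\<Sum>e\<in>UNIV. pd a (riem g b c d e) x * \<omega> e x + riem g b c d e x * pd a (\<omega> e) x)"
    using x dw riem_differentiable by (simp add: pd_sum pd_mult)
  then show ?thesis unfolding cov_d3_def cov_d31_def cov_d1_def
    using cov_d3_contraction_coords[where G="\<lambda>m i j. chr g m i j x" and R="\<lambda>b c d e. riem g b c d e x"
        and dR="\<lambda>e. pd a (riem g b c d e) x" and dw="\<lambda>e. pd a (\<omega> e) x" and w="\<lambda>e. \<omega> e x"]
    by simp
qed

lemma cov_d3_ricci_identity1:
  assumes w: "\<And>c. smooth_on U (\<omega> c)" and x: "x \<in> U"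
  shows "cov_d3 (cov_d2 (cov_d1 \<omega>)) p q r d x - cov_d3 (cov_d2 (cov_d1 \<omega>)) p r q d x
       = - (\<Sum>e\<in>UNIV. cov_d31 (riem g) p q r d e x * \<omega> e x) - (\<Sum>e\<in>UNIV. riem g q r d e x * cov_d1 \<omega> p e x)"
proof -
  define T where "T = cov_d2 (cov_d1 \<omega>)"
  define Q where "Q = (\<lambda>b c d y. \<Sum>e\<in>UNIV. riem g b c d e y * \<omega> e y)"
  have dT: "T q r d differentiable at x" for q r d
    unfolding T_def using smooth_on_differentiable[OF cov_d2_smooth[OF cov_d1_smooth[OF w]] x] .
  have ricci: "T q r d y - T r q d y = - Q q r d y" if "y \<in> U" for q r d y
    unfolding T_def Q_def using ricci_identity1[OF w that] .
  have "pd p (T q r d) x - pd p (T r q d) x = pd p (\<lambda>y. T q r d y - T r q d y) x"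
    using pd_diff[OF dT dT] by simp
  also have "\<dots> = pd p (\<lambda>y. (-1) * Q q r d y) x"
    by (rule pd_cong_open[OF openU x]) (simp add: ricci)
  also have "\<dots> = - pd p (Q q r d) x"
  proof -
    have "Q q r d differentiable at x" unfolding Q_def
      using x riem_differentiable smooth_on_differentiable[OF w x] by (auto intro!: differentiable_sum)
    then show ?thesis using pd_cmult[of "Q q r d" x p "-1"] by simp
  qed
  finally have pd_skew: "pd p (T q r d) x - pd p (T r q d) x = - pd p (Q q r d) x" .
  have "cov_d3 T p q r d x - cov_d3 T p r q d x = (pd p (T q r d) x - pd p (T r q d) x)
      - (\<Sum>m\<in>UNIV. chr g m p q x * (T m r d x - T r m d x) + chr g m p r x * (T q m d x - T m q d x)
            + chr g m p d x * (T q r m x - T r q m x))"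
    unfolding cov_d3_def by (simp add: algebra_simps sum.distrib sum_subtractf)
  also have "\<dots> = - cov_d3 Q p q r d x"
    unfolding pd_skew ricci[OF x] cov_d3_def by (simp add: algebra_simps sum.distrib sum_subtractf sum_negf)
  also have "\<dots> = - (\<Sum>e\<in>UNIV. cov_d31 (riem g) p q r d e x * \<omega> e x) - (\<Sum>e\<in>UNIV. riem g q r d e x * cov_d1 \<omega> p e x)"
    unfolding Q_def cov_d3_riem_contraction[OF w x] by (simp add: sum.distrib)
  finally show ?thesis unfolding T_def .
qed

text \<open>The cyclic sum of \<open>\<nabla>\<^sup>3\<omega>\<close> over its first three indices is alternated in two ways: by the
  Ricci identity for the 2-tensor \<open>\<nabla>\<omega>\<close>, where the first Bianchi identity kills the curvature terms,
  and by differentiating the Ricci identity for \<open>\<omega>\<close>, which produces \<open>\<nabla>Rm\<close>.\<close>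

lemma second_bianchi_applied:
  assumes w: "\<And>c. smooth_on U (\<omega> c)" and x: "x \<in> U"
  shows "(\<Sum>e\<in>UNIV. cov_d31 (riem g) a b c d e x * \<omega> e x) + (\<Sum>e\<in>UNIV. cov_d31 (riem g) b c a d e x * \<omega> e x)
       + (\<Sum>e\<in>UNIV. cov_d31 (riem g) c a b d e x * \<omega> e x) = 0"
proof -
  define S where "S = cov_d1 \<omega>"
  define K where "K = cov_d3 (cov_d2 S)"
  have S: "smooth_on U (S b c)" for b c unfolding S_def using w by auto
  have ricci2: "K p q r d x - K q p r d x
      = - (\<Sum>e\<in>UNIV. riem g p q r e x * S e d x) - (\<Sum>e\<in>UNIV. riem g p q d e x * S r e x)" for p q r
    unfolding K_def using ricci_identity2[OF S x, where a=p and b=q and c=r and d=d] by (simp add: sum.distrib)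
  have ricci1: "K p q r d x - K p r q d x
      = - (\<Sum>e\<in>UNIV. cov_d31 (riem g) p q r d e x * \<omega> e x) - (\<Sum>e\<in>UNIV. riem g q r d e x * S p e x)" for p q r
    unfolding K_def S_def by (rule cov_d3_ricci_identity1[OF w x])
  have "(\<Sum>e\<in>UNIV. riem g a b c e x * S e d x) + (\<Sum>e\<in>UNIV. riem g b c a e x * S e d x)
      + (\<Sum>e\<in>UNIV. riem g c a b e x * S e d x)
      = (\<Sum>e\<in>UNIV. (riem g a b c e x + riem g b c a e x + riem g c a b e x) * S e d x)"
    by (simp add: sum.distrib algebra_simps)
  also have "\<dots> = 0" using first_bianchi[OF x] by simp
  finally show ?thesis
    using ricci2[of a b c] ricci2[of b c a] ricci2[of c a b] ricci1[of a b c] ricci1[of b c a] ricci1[of c a b]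
    by linarith
qed

lemma second_bianchi: assumes x: "x \<in> U"
  shows "cov_d31 (riem g) a b c d m x + cov_d31 (riem g) b c a d m x + cov_d31 (riem g) c a b d m x = 0"
  using second_bianchi_applied[of "\<lambda>e y. if e = m then 1 else 0", OF _ x, of a b c d]
  by (simp add: smooth_on_If)

lemma ric_def': "ric g j k = (\<lambda>x. \<Sum>i\<in>UNIV. riem g i j k i x)" by (rule ext) (simp add: ric_def)
lemma ric_smooth[intro]: "smooth_on U (ric g j k)" unfolding ric_def' by (rule smooth_on_sum) auto
lemma ric_differentiable: "x \<in> U \<Longrightarrow> ric g j k differentiable at x" using smooth_on_differentiable ric_smooth by blast
lemma scal_def': "scal g = (\<lambda>x. \<Sum>i\<in>UNIV. \<Sum>j\<in>UNIV. ginv g i j x * ric g i j x)" by (rule ext) (simp add: scal_def)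
lemma scal_smooth[intro]: "smooth_on U (scal g)" unfolding scal_def' by (intro smooth_on_sum smooth_on_mult ginv_smooth ric_smooth)
lemma scal_differentiable: "x \<in> U \<Longrightarrow> scal g differentiable at x" using smooth_on_differentiable scal_smooth by blast

lemma cov_d31_cong: assumes "\<And>b c d e y. y \<in> U \<Longrightarrow> T1 b c d e y = T2 b c d e y" and x: "x \<in> U"
  shows "cov_d31 T1 a b c d e x = cov_d31 T2 a b c d e x"
  unfolding cov_d31_def using assms pd_cong_open[OF openU x, of "T1 b c d e" "T2 b c d e" a] by simp

lemma cov_d31_mult1: assumes X: "\<And>c d. X c d differentiable at x" and Y: "\<And>b e. Y b e differentiable at x"
  shows "cov_d31 (\<lambda>b c d e y. X c d y * Y b e y) a b c d e x = cov_d2 X a c d x * Y b e x + X c d x * cov_d11 Y a b e x"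
  unfolding cov_d31_def cov_d2_def cov_d11_def pd_mult[OF X Y]
  by (simp add: algebra_simps sum.distrib sum_distrib_left sum_distrib_right sum_subtractf)

lemma cov_d31_mult2: assumes X: "\<And>c d. X c d differentiable at x" and Y: "\<And>b e. Y b e differentiable at x"
  shows "cov_d31 (\<lambda>b c d e y. X b d y * Y c e y) a b c d e x = cov_d2 X a b d x * Y c e x + X b d x * cov_d11 Y a c e x"
  unfolding cov_d31_def cov_d2_def cov_d11_def pd_mult[OF X Y]
  by (simp add: algebra_simps sum.distrib sum_distrib_left sum_distrib_right sum_subtractf)

lemma cov_d2_g: "x \<in> U \<Longrightarrow> cov_d2 g a c d x = 0"
  unfolding cov_d2_def using metric_compatible by simp

lemma cov_d11_delta: "cov_d11 (\<lambda>b e y. if b = e then 1 else 0) a b e x = 0"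
  unfolding cov_d11_def by simp

definition ric_raised :: "'n \<Rightarrow> 'n \<Rightarrow> real^'n \<Rightarrow> real" where
  "ric_raised b e y = (\<Sum>l\<in>UNIV. ric g b l y * ginv g l e y)"

lemma ric_raised_def': "ric_raised b e = (\<lambda>y. \<Sum>l\<in>UNIV. ric g b l y * ginv g l e y)" by (rule ext) (simp add: ric_raised_def)
lemma ric_raised_smooth[intro]: "smooth_on U (ric_raised b e)" unfolding ric_raised_def' by (intro smooth_on_sum smooth_on_mult ginv_smooth ric_smooth)

lemma cov_d11_ric_raised: assumes x: "x \<in> U"
  shows "cov_d11 ric_raised a b e x = (\<Sum>l\<in>UNIV. cov_ric g a b l x * ginv g l e x)"
proof -
  have pdr: "pd a (ric_raised b e) x = (\<Sum>l\<in>UNIV. pd a (ric g b l) x * ginv g l e x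
      - ric g b l x * (\<Sum>m\<in>UNIV. chr g l a m x * ginv g m e x) - ric g b l x * (\<Sum>m\<in>UNIV. chr g e a m x * ginv g l m x))"
    unfolding ric_raised_def' using x ric_differentiable ginv_differentiable
    by (simp add: pd_sum pd_mult pd_ginv sum.distrib algebra_simps sum_negf)
  have e1: "(\<Sum>l\<in>UNIV. ric g b l x * (\<Sum>m\<in>UNIV. chr g l a m x * ginv g m e x))
      = (\<Sum>l\<in>UNIV. (\<Sum>m\<in>UNIV. chr g m a l x * ric g b m x) * ginv g l e x)"
  proof -
    have "(\<Sum>l\<in>UNIV. ric g b l x * (\<Sum>m\<in>UNIV. chr g l a m x * ginv g m e x))
        = (\<Sum>m\<in>UNIV. (\<Sum>l\<in>UNIV. ric g b l x * chr g l a m x) * ginv g m e x)"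
      by (rule sum_mult_sum_swap)
    then show ?thesis by (simp add: mult.commute)
  qed
  have e2: "(\<Sum>l\<in>UNIV. ric g b l x * (\<Sum>m\<in>UNIV. chr g e a m x * ginv g l m x))
      = (\<Sum>m\<in>UNIV. chr g e a m x * (\<Sum>l\<in>UNIV. ric g b l x * ginv g l m x))"
  proof -
    have "(\<Sum>l\<in>UNIV. ric g b l x * (\<Sum>m\<in>UNIV. chr g e a m x * ginv g l m x))
        = (\<Sum>l\<in>UNIV. \<Sum>m\<in>UNIV. chr g e a m x * (ric g b l x * ginv g l m x))"
      by (simp add: sum_distrib_left mult_ac)
    also have "\<dots> = (\<Sum>m\<in>UNIV. \<Sum>l\<in>UNIV. chr g e a m x * (ric g b l x * ginv g l m x))"
      by (rule sum.swap)
    also have "\<dots> = (\<Sum>m\<in>UNIV. chr g e a m x * (\<Sum>l\<in>UNIV. ric g b l x * ginv g l m x))"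
      by (simp add: sum_distrib_left)
    finally show ?thesis .
  qed
  have e3: "(\<Sum>m\<in>UNIV. chr g m a b x * (\<Sum>l\<in>UNIV. ric g m l x * ginv g l e x))
      = (\<Sum>l\<in>UNIV. (\<Sum>m\<in>UNIV. chr g m a b x * ric g m l x) * ginv g l e x)"
    by (rule sum_mult_sum_swap)
  show ?thesis
    unfolding cov_d11_def pdr cov_ric_def ric_raised_def
    using e1 e2 e3
    by (simp add: sum_subtractf sum.distrib algebra_simps sum_distrib_right)
qed

lemma cov_d2_scal_g: assumes x: "x \<in> U"
  shows "cov_d2 (\<lambda>c d y. scal g y * g c d y) a c d x = pd a (scal g) x * g c d x"
proof -
  have "cov_d2 (\<lambda>c d y. scal g y * g c d y) a c d x = pd a (scal g) x * g c d x + scal g x * cov_d2 g a c d x"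
    unfolding cov_d2_def using pd_mult[OF scal_differentiable[OF x] g_differentiable[OF x]]
    by (simp add: algebra_simps sum.distrib sum_distrib_left sum_subtractf)
  then show ?thesis using cov_d2_g[OF x] by simp
qed

lemma cov_d31_combination:
  fixes T1 T2 T3 T4 T5 T6 :: "'n \<Rightarrow> 'n \<Rightarrow> 'n \<Rightarrow> 'n \<Rightarrow> real^'n \<Rightarrow> real"
  assumes d: "\<And>b c d e. T1 b c d e differentiable at x" "\<And>b c d e. T2 b c d e differentiable at x"
    "\<And>b c d e. T3 b c d e differentiable at x" "\<And>b c d e. T4 b c d e differentiable at x"
    "\<And>b c d e. T5 b c d e differentiable at x" "\<And>b c d e. T6 b c d e differentiable at x"
  shows "cov_d31 (\<lambda>b c d e y. P * (T1 b c d e y - T2 b c d e y + (T3 b c d e y - T4 b c d e y)) - Q * (T5 b c d e y - T6 b c d e y)) a b c d e x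
    = P * (cov_d31 T1 a b c d e x - cov_d31 T2 a b c d e x + (cov_d31 T3 a b c d e x - cov_d31 T4 a b c d e x)) - Q * (cov_d31 T5 a b c d e x - cov_d31 T6 a b c d e x)"
proof -
  have "pd a (\<lambda>y. P * (T1 b c d e y - T2 b c d e y + (T3 b c d e y - T4 b c d e y)) - Q * (T5 b c d e y - T6 b c d e y)) x
     = P * (pd a (T1 b c d e) x - pd a (T2 b c d e) x + (pd a (T3 b c d e) x - pd a (T4 b c d e) x))
       - Q * (pd a (T5 b c d e) x - pd a (T6 b c d e) x)"
    using d by (simp add: pd_diff pd_add pd_cmult)
  then show ?thesis unfolding cov_d31_def
    by (simp add: algebra_simps sum.distrib sum_subtractf sum_distrib_left)
qed

end

context metric_chart
begin

lemma hess_eq_cov_d1: "hess g F = cov_d1 (\<lambda>c. pd c F)"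
  by (intro ext) (simp add: hess_def cov_d1_def)

lemma hess_smooth [intro]: "smooth_on U F \<Longrightarrow> smooth_on U (hess g F i j)"
  unfolding hess_eq_cov_d1 by (intro cov_d1_smooth smooth_on_pd)

lemma hess_sym:
  assumes F: "smooth_on U F" and x: "x \<in> U"
  shows "hess g F i j x = hess g F j i x"
proof -
  have "pd i (pd j F) x = pd j (pd i F) x"
    by (rule pd_commute[OF openU x]) (use smooth_on_differentiable smooth_on_pd F x in auto)
  then show ?thesis unfolding hess_def using chr_sym[OF x] by simp
qed

lemma cov_d2_hess_sym:
  assumes F: "smooth_on U F" and x: "x \<in> U"
  shows "cov_d2 (hess g F) a b c x = cov_d2 (hess g F) a c b x"
proof -
  have "pd a (hess g F b c) x = pd a (hess g F c b) x"
    by (rule pd_cong_open[OF openU x]) (simp add: hess_sym[OF F])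
  then show ?thesis unfolding cov_d2_def using hess_sym[OF F x] by (simp add: add.commute)
qed

lemma sum_pd_ginv_quadratic:
  assumes x: "x \<in> U"
  shows "(\<Sum>b\<in>UNIV. \<Sum>c\<in>UNIV. pd a (ginv g b c) x * V b * V c)
     = - (\<Sum>b\<in>UNIV. \<Sum>c\<in>UNIV. ginv g b c x * (\<Sum>m\<in>UNIV. chr g m a b x * V m) * V c)
       - (\<Sum>b\<in>UNIV. \<Sum>c\<in>UNIV. ginv g b c x * V b * (\<Sum>m\<in>UNIV. chr g m a c x * V m))"
proof -
  have expand: "pd a (ginv g b c) x * V b * V c = - (\<Sum>m\<in>UNIV. chr g b a m x * ginv g m c x * V b * V c)
       - (\<Sum>m\<in>UNIV. chr g c a m x * ginv g b m x * V b * V c)" for b c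
    unfolding pd_ginv[OF x] sum.distrib by (simp add: left_diff_distrib sum_distrib_right)
  have first: "(\<Sum>b\<in>UNIV. \<Sum>c\<in>UNIV. \<Sum>m\<in>UNIV. chr g b a m x * ginv g m c x * V b * V c)
      = (\<Sum>b\<in>UNIV. \<Sum>c\<in>UNIV. ginv g b c x * (\<Sum>m\<in>UNIV. chr g m a b x * V m) * V c)"
    by (subst sum_reverse3) (simp add: sum_distrib_left sum_distrib_right mult_ac chr_sym[OF x])
  have second: "(\<Sum>b\<in>UNIV. \<Sum>c\<in>UNIV. \<Sum>m\<in>UNIV. chr g c a m x * ginv g b m x * V b * V c)
      = (\<Sum>b\<in>UNIV. \<Sum>c\<in>UNIV. ginv g b c x * V b * (\<Sum>m\<in>UNIV. chr g m a c x * V m))"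
    by (subst sum_swap_inner) (simp add: sum_distrib_left sum_distrib_right mult_ac chr_sym[OF x])
  show ?thesis unfolding expand sum_subtractf sum_negf first second by simp
qed

text \<open>The Christoffel terms of \<open>\<partial>\<^sub>a g\<^sup>b\<^sup>c\<close> cancel those of the two Hessians.\<close>

lemma pd_norm_grad:
  assumes F: "smooth_on U F" and x: "x \<in> U"
  shows "pd a (\<lambda>y. norm1 g y (\<lambda>b. pd b F y)) x
       = 2 * (\<Sum>b\<in>UNIV. \<Sum>c\<in>UNIV. ginv g b c x * hess g F a b x * pd c F x)"
proof -
  have dF: "pd b F differentiable at x" for b using smooth_on_differentiable[OF smooth_on_pd[OF F] x] .
  have pd2: "pd a (pd b F) x = hess g F a b x + (\<Sum>m\<in>UNIV. chr g m a b x * pd m F x)" for b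
    unfolding hess_def by simp
  have "pd a (\<lambda>y. norm1 g y (\<lambda>b. pd b F y)) x
     = (\<Sum>b\<in>UNIV. \<Sum>c\<in>UNIV. pd a (ginv g b c) x * pd b F x * pd c F x
        + ginv g b c x * pd a (pd b F) x * pd c F x + ginv g b c x * pd b F x * pd a (pd c F) x)"
    unfolding norm1_def using x ginv_differentiable dF
    by (simp add: pd_add pd_sum pd_mult algebra_simps)
  also have "\<dots> = (\<Sum>b\<in>UNIV. \<Sum>c\<in>UNIV. pd a (ginv g b c) x * pd b F x * pd c F x)
       + (\<Sum>b\<in>UNIV. \<Sum>c\<in>UNIV. ginv g b c x * (\<Sum>m\<in>UNIV. chr g m a b x * pd m F x) * pd c F x)
       + (\<Sum>b\<in>UNIV. \<Sum>c\<in>UNIV. ginv g b c x * pd b F x * (\<Sum>m\<in>UNIV. chr g m a c x * pd m F x))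
       + (\<Sum>b\<in>UNIV. \<Sum>c\<in>UNIV. ginv g b c x * hess g F a b x * pd c F x)
       + (\<Sum>b\<in>UNIV. \<Sum>c\<in>UNIV. ginv g b c x * pd b F x * hess g F a c x)"
    unfolding pd2 by (simp add: sum.distrib algebra_simps)
  also have "(\<Sum>b\<in>UNIV. \<Sum>c\<in>UNIV. ginv g b c x * pd b F x * hess g F a c x)
      = (\<Sum>b\<in>UNIV. \<Sum>c\<in>UNIV. ginv g b c x * hess g F a b x * pd c F x)"
    by (subst sum.swap) (simp add: ginv_sym[OF x] mult_ac)
  finally show ?thesis unfolding sum_pd_ginv_quadratic[OF x] by simp
qed

lemma trace_cov_ric: assumes x: "x \<in> U"
  shows "(\<Sum>c\<in>UNIV. \<Sum>d\<in>UNIV. ginv g c d x * cov_ric g a c d x) = pd a (scal g) x"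
proof -
  have A: "pd a (scal g) x = (\<Sum>c\<in>UNIV. \<Sum>d\<in>UNIV. pd a (ginv g c d) x * ric g c d x + ginv g c d x * pd a (ric g c d) x)"
    unfolding scal_def' using x ginv_differentiable ric_differentiable
    by (simp add: pd_sum pd_mult differentiable_sum)
  have B: "(\<Sum>c\<in>UNIV. \<Sum>d\<in>UNIV. pd a (ginv g c d) x * ric g c d x)
     = - (\<Sum>c\<in>UNIV. \<Sum>d\<in>UNIV. \<Sum>m\<in>UNIV. chr g c a m x * ginv g m d x * ric g c d x)
       - (\<Sum>c\<in>UNIV. \<Sum>d\<in>UNIV. \<Sum>m\<in>UNIV. chr g d a m x * ginv g c m x * ric g c d x)"
  proof -
    have i: "pd a (ginv g c d) x * ric g c d x = - (\<Sum>m\<in>UNIV. chr g c a m x * ginv g m d x * ric g c d x)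
       - (\<Sum>m\<in>UNIV. chr g d a m x * ginv g c m x * ric g c d x)" for c d
      unfolding pd_ginv[OF x] sum.distrib by (simp add: left_diff_distrib sum_distrib_right)
    show ?thesis unfolding i sum_subtractf sum_negf by simp
  qed
  have C: "(\<Sum>c\<in>UNIV. \<Sum>d\<in>UNIV. ginv g c d x * cov_ric g a c d x)
     = (\<Sum>c\<in>UNIV. \<Sum>d\<in>UNIV. ginv g c d x * pd a (ric g c d) x)
       - (\<Sum>c\<in>UNIV. \<Sum>d\<in>UNIV. \<Sum>m\<in>UNIV. ginv g c d x * chr g m a c x * ric g m d x)
       - (\<Sum>c\<in>UNIV. \<Sum>d\<in>UNIV. \<Sum>m\<in>UNIV. ginv g c d x * chr g m a d x * ric g c m x)"
    unfolding cov_ric_def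
    by (simp add: sum_distrib_left sum.distrib sum_subtractf algebra_simps)
  have D1: "(\<Sum>c\<in>UNIV. \<Sum>d\<in>UNIV. \<Sum>m\<in>UNIV. ginv g c d x * chr g m a c x * ric g m d x)
      = (\<Sum>c\<in>UNIV. \<Sum>d\<in>UNIV. \<Sum>m\<in>UNIV. chr g c a m x * ginv g m d x * ric g c d x)"
    by (subst sum_reverse3) (simp add: mult_ac)
  have D2: "(\<Sum>c\<in>UNIV. \<Sum>d\<in>UNIV. \<Sum>m\<in>UNIV. ginv g c d x * chr g m a d x * ric g c m x)
      = (\<Sum>c\<in>UNIV. \<Sum>d\<in>UNIV. \<Sum>m\<in>UNIV. chr g d a m x * ginv g c m x * ric g c d x)"
    by (subst sum_swap_inner) (simp add: mult_ac)
  have E: "pd a (scal g) x = (\<Sum>c\<in>UNIV. \<Sum>d\<in>UNIV. pd a (ginv g c d) x * ric g c d x)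
      + (\<Sum>c\<in>UNIV. \<Sum>d\<in>UNIV. ginv g c d x * pd a (ric g c d) x)"
    unfolding A by (simp add: sum.distrib)
  show ?thesis using B C D1 D2 E by linarith
qed

end

section \<open>Gradient solitons with vanishing Weyl tensor\<close>

locale conformally_flat_soliton = metric_chart U g for U :: "(real^'n::finite) set" and g +
  fixes F :: "real^'n \<Rightarrow> real" and \<rho> :: real
  assumes dim: "CARD('n) \<ge> 3"
    and smooth_F: "smooth_on U F"
    and soliton: "\<forall>x\<in>U. \<forall>i j. ric g i j x = hess g F i j x + \<rho> * g i j x"
    and weyl_vanishes: "\<forall>x\<in>U. \<forall>i j k l. weyl g i j k l x = 0"
begin

definition ricci_coeff :: real where "ricci_coeff = 1 / (real CARD('n) - 2)"

definition scal_coeff :: real where "scal_coeff = 1 / ((real CARD('n) - 1) * (real CARD('n) - 2))"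

lemma ricci_coeff_mult: "ricci_coeff * (real CARD('n) - 2) = 1"
  unfolding ricci_coeff_def using dim by simp

lemma scal_coeff_mult: "scal_coeff * (real CARD('n) - 1) = ricci_coeff"
  unfolding scal_coeff_def ricci_coeff_def using dim by simp

lemma ricci_coeff_minus_scal_coeff: "ricci_coeff - scal_coeff = 1 / (real CARD('n) - 1)"
proof -
  have "(ricci_coeff - scal_coeff) * (real CARD('n) - 1) = 1"
    using ricci_coeff_mult scal_coeff_mult by (simp add: algebra_simps)
  then show ?thesis using dim by (simp add: eq_divide_eq)
qed

lemma scal_coeff_eq: "scal_coeff = ricci_coeff / (real CARD('n) - 1)"
  using scal_coeff_mult dim by (simp add: eq_divide_eq)

lemma ric_sym: "x \<in> U \<Longrightarrow> ric g i j x = ric g j i x"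
  using soliton hess_sym[OF smooth_F] g_sym by simp

lemma cov_ric_sym:
  assumes x: "x \<in> U"
  shows "cov_ric g a c d x = cov_ric g a d c x"
proof -
  have "pd a (ric g c d) x = pd a (ric g d c) x" by (rule pd_cong_open[OF openU x]) (simp add: ric_sym)
  then show ?thesis unfolding cov_ric_def using ric_sym[OF x] by (simp add: add.commute)
qed

subsection \<open>The curvature tensor is determined by the Ricci tensor\<close>

definition delta_fun :: "'n \<Rightarrow> 'n \<Rightarrow> real^'n \<Rightarrow> real" where
  "delta_fun b e y = (if b = e then 1 else 0)"

definition scal_g :: "'n \<Rightarrow> 'n \<Rightarrow> real^'n \<Rightarrow> real" where
  "scal_g c d y = scal g y * g c d y"

definition ricci_part :: "'n \<Rightarrow> 'n \<Rightarrow> 'n \<Rightarrow> 'n \<Rightarrow> real^'n \<Rightarrow> real" where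
  "ricci_part b c d e y =
     ricci_coeff * (ric g c d y * delta_fun b e y - ric g b d y * delta_fun c e y
                    + (g c d y * ric_raised b e y - g b d y * ric_raised c e y))
     - scal_coeff * (scal_g c d y * delta_fun b e y - scal_g b d y * delta_fun c e y)"

lemma delta_fun_smooth [intro]: "smooth_on U (delta_fun b e)"
  unfolding delta_fun_def by (cases "b = e") auto

lemma scal_g_smooth [intro]: "smooth_on U (scal_g c d)"
  unfolding scal_g_def by (intro smooth_on_mult scal_smooth g_smooth)

lemma riem_eq_ricci_part:
  assumes y: "y \<in> U"
  shows "riem g b c d e y = ricci_part b c d e y"
proof -
  have rm: "rm g b c d l y =
      ricci_coeff * (ric g c d y * g b l y - ric g b d y * g c l y + ric g b l y * g c d y - ric g c l y * g b d y)
      - (scal g y * scal_coeff) * (g c d y * g b l y - g b d y * g c l y)" for l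
    using weyl_vanishes y unfolding weyl_def ricci_coeff_def scal_coeff_def by (simp add: algebra_simps)
  have "riem g b c d e y = (\<Sum>m\<in>UNIV. riem g b c d m y * (\<Sum>l\<in>UNIV. g m l y * ginv g l e y))"
    by (simp add: g_ginv[OF y])
  also have "\<dots> = (\<Sum>l\<in>UNIV. rm g b c d l y * ginv g l e y)"
    unfolding rm_def by (rule sum_sum_mult_swap'[symmetric])
  also have "\<dots> = (\<Sum>l\<in>UNIV.
          ricci_coeff * (ric g c d y * (g b l y * ginv g l e y)) - ricci_coeff * (ric g b d y * (g c l y * ginv g l e y))
        + ricci_coeff * (g c d y * (ric g b l y * ginv g l e y)) - ricci_coeff * (g b d y * (ric g c l y * ginv g l e y))
        - (scal g y * scal_coeff) * (g c d y * (g b l y * ginv g l e y))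
        + (scal g y * scal_coeff) * (g b d y * (g c l y * ginv g l e y)))"
    unfolding rm by (rule sum.cong[OF refl]) (simp add: algebra_simps)
  also have "\<dots> = ricci_part b c d e y"
    unfolding sum.distrib sum_subtractf sum_distrib_left[symmetric] g_ginv[OF y]
      ricci_part_def ric_raised_def[symmetric] delta_fun_def scal_g_def
    by (simp add: algebra_simps)
  finally show ?thesis .
qed

lemma cov_d31_ricci_part:
  assumes x: "x \<in> U"
  shows "cov_d31 ricci_part a b c d e x =
     ricci_coeff * (cov_d31 (\<lambda>b c d e y. ric g c d y * delta_fun b e y) a b c d e x
                    - cov_d31 (\<lambda>b c d e y. ric g b d y * delta_fun c e y) a b c d e x
       + (cov_d31 (\<lambda>b c d e y. g c d y * ric_raised b e y) a b c d e x
          - cov_d31 (\<lambda>b c d e y. g b d y * ric_raised c e y) a b c d e x))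
     - scal_coeff * (cov_d31 (\<lambda>b c d e y. scal_g c d y * delta_fun b e y) a b c d e x
                     - cov_d31 (\<lambda>b c d e y. scal_g b d y * delta_fun c e y) a b c d e x)"
proof -
  have "ricci_part = (\<lambda>b c d e y.
      ricci_coeff * ((\<lambda>b c d e y. ric g c d y * delta_fun b e y) b c d e y
                     - (\<lambda>b c d e y. ric g b d y * delta_fun c e y) b c d e y
        + ((\<lambda>b c d e y. g c d y * ric_raised b e y) b c d e y
           - (\<lambda>b c d e y. g b d y * ric_raised c e y) b c d e y))
      - scal_coeff * ((\<lambda>b c d e y. scal_g c d y * delta_fun b e y) b c d e y
                      - (\<lambda>b c d e y. scal_g b d y * delta_fun c e y) b c d e y))"
    by (intro ext) (simp add: ricci_part_def)
  then show ?thesis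
    by (simp only:) (rule cov_d31_combination,
        use x smooth_on_differentiable ric_smooth delta_fun_smooth g_smooth ric_raised_smooth scal_g_smooth
        in \<open>auto intro!: differentiable_mult\<close>)
qed

lemma cov_d31_riem:
  assumes x: "x \<in> U"
  shows "cov_d31 (riem g) a b c d e x
       = inverse_pair.ricci_part_deriv (\<lambda>i j. ginv g i j x) (\<lambda>i j. g i j x) ricci_coeff scal_coeff
           (\<lambda>a c d. cov_ric g a c d x) (\<lambda>a. pd a (scal g) x) a b c d e"
proof -
  interpret P: inverse_pair "\<lambda>i j. ginv g i j x" "\<lambda>i j. g i j x" by (rule inverse_pair_at[OF x])
  have d: "ric g c d differentiable at x" "delta_fun b e differentiable at x" "g c d differentiable at x"
     "ric_raised b e differentiable at x" "scal_g c d differentiable at x" for b c d e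
    using x smooth_on_differentiable ric_smooth delta_fun_smooth g_smooth ric_raised_smooth scal_g_smooth by blast+
  have delta: "cov_d11 delta_fun a b e x = 0" for b e
    using cov_d11_delta[of a b e x] by (simp add: delta_fun_def[abs_def])
  have ric: "cov_d2 (ric g) a c d x = cov_ric g a c d x" for c d unfolding cov_d2_def cov_ric_def ..
  have scal: "cov_d2 scal_g a c d x = pd a (scal g) x * g c d x" for c d
    using cov_d2_scal_g[OF x] by (simp add: scal_g_def[abs_def])
  have "cov_d31 (riem g) a b c d e x = cov_d31 ricci_part a b c d e x"
    by (rule cov_d31_cong[OF _ x]) (simp add: riem_eq_ricci_part)
  also have "\<dots> = inverse_pair.ricci_part_deriv (\<lambda>i j. ginv g i j x) (\<lambda>i j. g i j x) ricci_coeff scal_coeff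
           (\<lambda>a c d. cov_ric g a c d x) (\<lambda>a. pd a (scal g) x) a b c d e"
    unfolding cov_d31_ricci_part[OF x]
      cov_d31_mult1[of "ric g" x delta_fun, OF d(1) d(2)] cov_d31_mult2[of "ric g" x delta_fun, OF d(1) d(2)]
      cov_d31_mult1[of g x ric_raised, OF d(3) d(4)] cov_d31_mult2[of g x ric_raised, OF d(3) d(4)]
      cov_d31_mult1[of scal_g x delta_fun, OF d(5) d(2)] cov_d31_mult2[of scal_g x delta_fun, OF d(5) d(2)]
      delta ric scal cov_d2_g[OF x] cov_d11_ric_raised[OF x]
      P.ricci_part_deriv_def P.raise_last_def
    by (simp add: delta_fun_def)
  finally show ?thesis .
qed

text \<open>The contracted second Bianchi identity \<open>2 div Ric = dR\<close>, obtained here from the full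
  second Bianchi identity because \<open>\<nabla>Rm\<close> is expressed through \<open>\<nabla>Ric\<close>.\<close>

lemma contracted_bianchi:
  assumes x: "x \<in> U"
  shows "2 * (\<Sum>c\<in>UNIV. \<Sum>d\<in>UNIV. ginv g c d x * cov_ric g c b d x) = pd b (scal g) x"
proof -
  interpret P: inverse_pair "\<lambda>i j. ginv g i j x" "\<lambda>i j. g i j x" by (rule inverse_pair_at[OF x])
  have "2 * P.divergence (\<lambda>a c d. cov_ric g a c d x) b = pd b (scal g) x"
  proof (rule P.contracted_bianchi_algebra)
    show "\<And>a. (\<Sum>c\<in>UNIV. \<Sum>d\<in>UNIV. ginv g c d x * cov_ric g a c d x) = pd a (scal g) x"
      by (rule trace_cov_ric[OF x])
    show "P.ricci_part_deriv ricci_coeff scal_coeff (\<lambda>a c d. cov_ric g a c d x) (\<lambda>a. pd a (scal g) x) a b c d e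
        + P.ricci_part_deriv ricci_coeff scal_coeff (\<lambda>a c d. cov_ric g a c d x) (\<lambda>a. pd a (scal g) x) b c a d e
        + P.ricci_part_deriv ricci_coeff scal_coeff (\<lambda>a c d. cov_ric g a c d x) (\<lambda>a. pd a (scal g) x) c a b d e = 0"
      for a b c d e
      using second_bianchi[OF x, of a b c d e] unfolding cov_d31_riem[OF x] .
  qed (fact ricci_coeff_mult scal_coeff_mult)+
  then show ?thesis unfolding P.divergence_eq .
qed

definition ric_grad :: "'n \<Rightarrow> real^'n \<Rightarrow> real" where
  "ric_grad k x = (\<Sum>b\<in>UNIV. \<Sum>c\<in>UNIV. ginv g b c x * ric g k b x * pd c F x)"

lemma cov_ric_eq_cov_hess:
  assumes x: "x \<in> U"
  shows "cov_ric g k i j x = cov_d2 (hess g F) k i j x"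
proof -
  have "pd k (ric g i j) x = pd k (\<lambda>y. hess g F i j y + \<rho> * g i j y) x"
    by (rule pd_cong_open[OF openU x]) (use soliton in auto)
  also have "\<dots> = pd k (hess g F i j) x + \<rho> * pd k (g i j) x"
    using x smooth_on_differentiable[OF hess_smooth[OF smooth_F] x] g_differentiable
    by (simp add: pd_add pd_cmult)
  finally have "pd k (ric g i j) x = pd k (hess g F i j) x + \<rho> * pd k (g i j) x" .
  then have "cov_ric g k i j x = cov_d2 (hess g F) k i j x + \<rho> * cov_d2 g k i j x"
    unfolding cov_ric_def cov_d2_def using soliton x
    by (simp add: algebra_simps sum.distrib sum_distrib_left)
  then show ?thesis using cov_d2_g[OF x] by simp
qed

text \<open>By the soliton equation \<open>\<nabla>Ric = \<nabla>\<nabla>\<nabla>F\<close>, so the skew part of \<open>\<nabla>Ric\<close> is a commutator of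
  covariant derivatives of \<open>dF\<close>.\<close>

lemma cov_ric_skew:
  assumes x: "x \<in> U"
  shows "cov_ric g k i j x - cov_ric g j i k x = - (\<Sum>e\<in>UNIV. riem g k j i e x * pd e F x)"
proof -
  have "cov_ric g k i j x - cov_ric g j i k x
      = cov_d2 (cov_d1 (\<lambda>c. pd c F)) k j i x - cov_d2 (cov_d1 (\<lambda>c. pd c F)) j k i x"
    unfolding cov_ric_eq_cov_hess[OF x] using cov_d2_hess_sym[OF smooth_F x] hess_eq_cov_d1 by metis
  also have "\<dots> = - (\<Sum>e\<in>UNIV. riem g k j i e x * pd e F x)"
    by (rule ricci_identity1[OF smooth_on_pd[OF smooth_F] x])
  finally show ?thesis .
qed

lemma sum_ric_raised_grad: "(\<Sum>e\<in>UNIV. ric_raised k e x * pd e F x) = ric_grad k x"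
proof -
  have "(\<Sum>e\<in>UNIV. ric_raised k e x * pd e F x) = (\<Sum>e\<in>UNIV. \<Sum>l\<in>UNIV. ginv g l e x * ric g k l x * pd e F x)"
    unfolding ric_raised_def by (simp add: sum_distrib_right sum_distrib_left mult_ac)
  also have "\<dots> = ric_grad k x" unfolding ric_grad_def by (rule sum.swap)
  finally show ?thesis .
qed

lemma riem_grad:
  assumes x: "x \<in> U"
  shows "(\<Sum>e\<in>UNIV. riem g k j i e x * pd e F x)
       = ricci_coeff * (ric g j i x * pd k F x - ric g k i x * pd j F x + (g j i x * ric_grad k x - g k i x * ric_grad j x))
         - scal_coeff * (scal g x * g j i x * pd k F x - scal g x * g k i x * pd j F x)"
proof -
  have "(\<Sum>e\<in>UNIV. riem g k j i e x * pd e F x) = (\<Sum>e\<in>UNIV. ricci_part k j i e x * pd e F x)"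
    using riem_eq_ricci_part[OF x] by simp
  also have "\<dots> = ricci_coeff * (ric g j i x * (\<Sum>e\<in>UNIV. delta_fun k e x * pd e F x)
        - ric g k i x * (\<Sum>e\<in>UNIV. delta_fun j e x * pd e F x)
      + (g j i x * (\<Sum>e\<in>UNIV. ric_raised k e x * pd e F x) - g k i x * (\<Sum>e\<in>UNIV. ric_raised j e x * pd e F x)))
      - scal_coeff * (scal_g j i x * (\<Sum>e\<in>UNIV. delta_fun k e x * pd e F x)
        - scal_g k i x * (\<Sum>e\<in>UNIV. delta_fun j e x * pd e F x))"
    unfolding ricci_part_def by (simp add: algebra_simps sum.distrib sum_subtractf sum_distrib_left)
  finally show ?thesis unfolding sum_ric_raised_grad delta_fun_def scal_g_def by simp
qed

lemma trace_cov_ric_skew: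
  assumes x: "x \<in> U"
  shows "(\<Sum>i\<in>UNIV. \<Sum>j\<in>UNIV. ginv g i j x * (cov_ric g k i j x - cov_ric g j i k x)) = - ric_grad k x"
proof -
  have t1: "(\<Sum>i\<in>UNIV. \<Sum>j\<in>UNIV. ginv g i j x * (ric g k i x * pd j F x)) = ric_grad k x"
    unfolding ric_grad_def by (simp add: mult_ac)
  have t2: "(\<Sum>i\<in>UNIV. \<Sum>j\<in>UNIV. ginv g i j x * (g j i x * c)) = real CARD('n) * c" for c
  proof -
    have "(\<Sum>i\<in>UNIV. \<Sum>j\<in>UNIV. ginv g i j x * (g j i x * c)) = (\<Sum>i\<in>UNIV. (\<Sum>j\<in>UNIV. ginv g i j x * g j i x) * c)"
      by (simp add: sum_distrib_right sum_distrib_left mult_ac)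
    then show ?thesis by (simp add: ginv_g[OF x])
  qed
  have t3: "(\<Sum>i\<in>UNIV. \<Sum>j\<in>UNIV. ginv g i j x * (g k i x * h j)) = h k" for h
  proof -
    have "(\<Sum>i\<in>UNIV. \<Sum>j\<in>UNIV. ginv g i j x * (g k i x * h j)) = (\<Sum>j\<in>UNIV. (\<Sum>i\<in>UNIV. g k i x * ginv g i j x) * h j)"
      by (subst sum.swap) (simp add: sum_distrib_right sum_distrib_left mult_ac)
    then show ?thesis by (simp add: g_ginv[OF x])
  qed
  have t4: "(\<Sum>i\<in>UNIV. \<Sum>j\<in>UNIV. ginv g i j x * (ric g j i x * c)) = scal g x * c" for c
    unfolding scal_def by (simp add: sum_distrib_right sum_distrib_left mult_ac ric_sym[OF x])
  have "(\<Sum>i\<in>UNIV. \<Sum>j\<in>UNIV. ginv g i j x * (cov_ric g k i j x - cov_ric g j i k x))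
    = (\<Sum>i\<in>UNIV. \<Sum>j\<in>UNIV.
        - ricci_coeff * (ginv g i j x * (ric g j i x * pd k F x)) + ricci_coeff * (ginv g i j x * (ric g k i x * pd j F x))
        - ricci_coeff * (ginv g i j x * (g j i x * ric_grad k x)) + ricci_coeff * (ginv g i j x * (g k i x * ric_grad j x))
        + scal_coeff * scal g x * (ginv g i j x * (g j i x * pd k F x))
        - scal_coeff * scal g x * (ginv g i j x * (g k i x * pd j F x)))"
    unfolding cov_ric_skew[OF x] riem_grad[OF x] by (intro sum.cong refl) (simp add: algebra_simps)
  also have "\<dots> = - ricci_coeff * (scal g x * pd k F x) + ricci_coeff * ric_grad k x
        - ricci_coeff * (real CARD('n) * ric_grad k x) + ricci_coeff * ric_grad k x
        + scal_coeff * scal g x * (real CARD('n) * pd k F x) - scal_coeff * scal g x * pd k F x"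
    unfolding sum.distrib sum_subtractf sum_distrib_left[symmetric] t1 t2 t3[of "\<lambda>j. ric_grad j x"] t3[of "\<lambda>j. pd j F x"] t4 ..
  also have "\<dots> = - (ricci_coeff * (real CARD('n) - 2)) * ric_grad k x
        + (scal_coeff * (real CARD('n) - 1) - ricci_coeff) * scal g x * pd k F x"
    by (simp add: algebra_simps)
  finally show ?thesis unfolding ricci_coeff_mult scal_coeff_mult by simp
qed

lemma pd_scal:
  assumes x: "x \<in> U"
  shows "pd k (scal g) x = - 2 * ric_grad k x"
proof -
  have "(\<Sum>i\<in>UNIV. \<Sum>j\<in>UNIV. ginv g i j x * cov_ric g j i k x) = (\<Sum>c\<in>UNIV. \<Sum>d\<in>UNIV. ginv g c d x * cov_ric g c k d x)"
    by (subst sum.swap) (intro sum.cong refl, simp add: cov_ric_sym[OF x, of _ k] ginv_sym[OF x])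
  then have "(\<Sum>i\<in>UNIV. \<Sum>j\<in>UNIV. ginv g i j x * (cov_ric g k i j x - cov_ric g j i k x))
      = pd k (scal g) x - (\<Sum>c\<in>UNIV. \<Sum>d\<in>UNIV. ginv g c d x * cov_ric g c k d x)"
    unfolding right_diff_distrib sum_subtractf trace_cov_ric[OF x] by simp
  then show ?thesis using trace_cov_ric_skew[OF x, of k] contracted_bianchi[OF x, of k] by linarith
qed

lemma cotton_eq:
  assumes x: "x \<in> U"
  shows "cotton g i j k x = ricci_coeff * (ric g i k x * pd j F x - ric g i j x * pd k F x)
     + scal_coeff * (g i j x * (scal g x * pd k F x - ric_grad k x) - g i k x * (scal g x * pd j F x - ric_grad j x))"
proof -
  have "real CARD('n) \<ge> 3" using dim by simp
  then have coeff: "1 / (2 * (real CARD('n) - 1)) * 2 = ricci_coeff - scal_coeff"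
    unfolding ricci_coeff_minus_scal_coeff by (simp add: field_split_simps)
  have "cotton g i j k x = - (ricci_coeff * (ric g j i x * pd k F x - ric g k i x * pd j F x
      + (g j i x * ric_grad k x - g k i x * ric_grad j x))
      - scal_coeff * (scal g x * g j i x * pd k F x - scal g x * g k i x * pd j F x))
      + (1 / (2 * (real CARD('n) - 1)) * 2) * (g i j x * ric_grad k x - g i k x * ric_grad j x)"
    unfolding cotton_def cov_ric_skew[OF x] riem_grad[OF x] pd_scal[OF x]
    by (simp add: algebra_simps)
  also have "\<dots> = ricci_coeff * (ric g i k x * pd j F x - ric g i j x * pd k F x)
     + scal_coeff * (g i j x * (scal g x * pd k F x - ric_grad k x) - g i k x * (scal g x * pd j F x - ric_grad j x))"
    unfolding coeff using ric_sym[OF x, of i j] ric_sym[OF x, of i k] g_sym[OF x, of i j] g_sym[OF x, of i k]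
    by (simp add: algebra_simps)
  finally show ?thesis .
qed

lemma pd_Grho:
  assumes x: "x \<in> U"
  shows "(1/2) * pd a (Grho g F \<rho>) x = ric_grad a x"
proof -
  have dF: "F differentiable at x" "pd b F differentiable at x" for b
    using smooth_on_differentiable[OF smooth_F x] smooth_on_differentiable[OF smooth_on_pd[OF smooth_F] x] by auto
  have "(\<lambda>y. norm1 g y (\<lambda>b. pd b F y)) differentiable at x"
    unfolding norm1_def using x ginv_differentiable dF by simp
  then have "pd a (Grho g F \<rho>) x = pd a (\<lambda>y. norm1 g y (\<lambda>b. pd b F y)) x + 2 * \<rho> * pd a F x"
    unfolding Grho_def[abs_def] using dF by (simp add: pd_add pd_cmult)
  also have "\<dots> = 2 * (\<Sum>b\<in>UNIV. \<Sum>c\<in>UNIV. ginv g b c x * hess g F a b x * pd c F x) + 2 * \<rho> * pd a F x"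
    unfolding pd_norm_grad[OF smooth_F x] ..
  also have "(\<Sum>b\<in>UNIV. \<Sum>c\<in>UNIV. ginv g b c x * hess g F a b x * pd c F x)
      = ric_grad a x - \<rho> * (\<Sum>b\<in>UNIV. \<Sum>c\<in>UNIV. g a b x * ginv g b c x * pd c F x)"
  proof -
    have "(\<Sum>b\<in>UNIV. \<Sum>c\<in>UNIV. ginv g b c x * hess g F a b x * pd c F x)
        = (\<Sum>b\<in>UNIV. \<Sum>c\<in>UNIV. ginv g b c x * ric g a b x * pd c F x - \<rho> * (g a b x * ginv g b c x * pd c F x))"
      using soliton x by (intro sum.cong refl) (simp add: algebra_simps)
    then show ?thesis unfolding ric_grad_def by (simp add: sum_subtractf sum_distrib_left)
  qed
  also have "(\<Sum>b\<in>UNIV. \<Sum>c\<in>UNIV. g a b x * ginv g b c x * pd c F x)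
      = (\<Sum>c\<in>UNIV. (\<Sum>b\<in>UNIV. g a b x * ginv g b c x) * pd c F x)"
    by (subst sum.swap) (simp add: sum_distrib_right)
  finally show ?thesis by (simp add: g_ginv[OF x])
qed

lemma cotton_norm:
  assumes x: "x \<in> U"
  shows "norm3 g x (\<lambda>i j k. cotton g i j k x) =
     (1 / (real CARD('n) - 2)^2) *
       (norm3 g x (\<lambda>i j k. ric g i k x * pd j F x - ric g i j x * pd k F x)
        - (2 / (real CARD('n) - 1)) *
            norm1 g x (\<lambda>a. scal g x * pd a F x - (1/2) * pd a (Grho g F \<rho>) x))"
proof -
  interpret P: inverse_pair "\<lambda>i j. ginv g i j x" "\<lambda>i j. g i j x" by (rule inverse_pair_at[OF x])
  define A where "A i j k = ric g i k x * pd j F x - ric g i j x * pd k F x" for i j k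
  define V where "V a = scal g x * pd a F x - ric_grad a x" for a
  have cotton: "(\<lambda>i j k. cotton g i j k x) = (\<lambda>i j k. ricci_coeff * A i j k + scal_coeff * P.g_wedge V i j k)"
    by (intro ext) (simp add: cotton_eq[OF x] A_def V_def P.g_wedge_def)
  have tr12: "(\<Sum>i\<in>UNIV. \<Sum>j\<in>UNIV. ginv g i j x * A i j k) = - V k" for k
    unfolding A_def V_def ric_grad_def scal_def
    by (simp add: algebra_simps sum_subtractf sum_distrib_left sum_distrib_right ric_sym[OF x, of _ k])
  have tr13: "(\<Sum>i\<in>UNIV. \<Sum>k\<in>UNIV. ginv g i k x * A i j k) = V j" for j
    unfolding A_def V_def ric_grad_def scal_def
    by (simp add: algebra_simps sum_subtractf sum_distrib_left sum_distrib_right ric_sym[OF x, of _ j])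
  have P2: "ricci_coeff\<^sup>2 = 1 / (real CARD('n) - 2)\<^sup>2"
    unfolding ricci_coeff_def by (simp add: power_divide)
  have coeff: "2 * scal_coeff\<^sup>2 * (real CARD('n) - 1) - 4 * ricci_coeff * scal_coeff
      = - ricci_coeff\<^sup>2 * (2 / (real CARD('n) - 1))"
  proof -
    have "2 * scal_coeff\<^sup>2 * (real CARD('n) - 1) - 4 * ricci_coeff * scal_coeff
        = 2 * scal_coeff * (scal_coeff * (real CARD('n) - 1)) - 4 * ricci_coeff * scal_coeff"
      by (simp add: power2_eq_square)
    also have "\<dots> = - 2 * ricci_coeff * scal_coeff" unfolding scal_coeff_mult by (simp add: algebra_simps)
    finally show ?thesis unfolding scal_coeff_eq by (simp add: power2_eq_square)
  qed
  have "norm3 g x (\<lambda>i j k. cotton g i j k x)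
      = ricci_coeff\<^sup>2 * norm3 g x A
        + (2 * scal_coeff\<^sup>2 * (real CARD('n) - 1) - 4 * ricci_coeff * scal_coeff) * norm1 g x V"
    unfolding cotton norm3_def norm1_def P.norm3sq_def[symmetric] P.norm1sq_def[symmetric]
    by (rule P.norm3sq_plus_g_wedge[OF tr12 tr13])
  also have "\<dots> = (1 / (real CARD('n) - 2)\<^sup>2) * (norm3 g x A - (2 / (real CARD('n) - 1)) * norm1 g x V)"
    unfolding coeff P2 by (simp add: algebra_simps)
  also have "V = (\<lambda>a. scal g x * pd a F x - (1/2) * pd a (Grho g F \<rho>) x)"
    unfolding V_def pd_Grho[OF x] ..
  finally show ?thesis unfolding A_def .
qed

end

theorem lemma4p1:
  fixes U :: "(real^'n::finite) set"
    and g :: "'n \<Rightarrow> 'n \<Rightarrow> real^'n \<Rightarrow> real"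
    and F :: "real^'n \<Rightarrow> real"
    and \<rho> :: real
  assumes dim: "CARD('n) \<ge> 3"
    and metric: "is_metric U g"
    and smoothF: "smooth_on U F"
    and rho: "\<rho> = 1/2 \<or> \<rho> = -1/2"
    and soliton: "\<forall>x\<in>U. \<forall>i j. ric g i j x = hess g F i j x + \<rho> * g i j x"
    and weyl0: "\<forall>x\<in>U. \<forall>i j k l. weyl g i j k l x = 0"
  shows "\<forall>x\<in>U. norm3 g x (\<lambda>i j k. cotton g i j k x) =
     (1 / (real CARD('n) - 2)^2) *
       (norm3 g x (\<lambda>i j k. ric g i k x * pd j F x - ric g i j x * pd k F x)
        - (2 / (real CARD('n) - 1)) *
            norm1 g x (\<lambda>a. scal g x * pd a F x - (1/2) * pd a (Grho g F \<rho>) x))"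
proof -
  \<comment> \<open>The identity holds for every constant \<open>\<rho>\<close>.\<close>
  interpret conformally_flat_soliton U g F \<rho>
    by unfold_locales (use metric soliton weyl0 dim smoothF in \<open>auto simp: is_metric_def\<close>)
  show ?thesis using cotton_norm by blast
qed

end
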